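(* Let $\mathcal C$ be a category with a zero object and finite coproducts, $X$ an object of $\mathcal C$, and $r\in End_{\mathcal C}(X)[2]=Hom_{\mathcal C}(X,X\sqcup X)$ a formal difference law in the endomorphism $\Gamma$-ring $End_{\mathcal C}(X)$. Then $w=p^3_2\circ p^4_2(r^2)\in Hom_{\mathcal C}(X,X\sqcup X)$ is the coaddition of an abelian cogroup object structure on $X$ whose co-inverse is $p^2_1(r)\in Hom_{\mathcal C}(X,X)$ (and whose counit is the zero morphism, $s^2_{1,2,1}(r)=0$). Moreover, the multiplicative map $H\mathbb Z\to End_{\mathcal C}(X)$ determined by $r$ (with $\pm1_n\mapsto r^n$) coincides with the map associated to this abelian cogroup structure, namely at $[k]$ the additive extension $\tilde{\mathbb Z}[k]\to Hom_{\mathcal C}(X,X\wedge[k])$ of the map sending $i\in\{1,\dots,k\}$ to the $i$-th coproduct inclusion $X\to X\wedge[k]$ (addition in $Hom_{\mathcal C}(X,X\wedge[k])$ being induced by the cogroup structure).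
   Context: Let $[n]=\{0,1,\dots,n\}$, pointed at $0$. A $\Gamma$-space is a functor $F$ from the finite pointed sets $[n]$ (with pointed maps) to pointed simplicial sets with $F[0]$ a point; for a pointed map $f$ we write $f$ also for $F(f)$; $\Sigma_n$ acts on $F[n]$ via permutations of $\{1,\dots,n\}$. We identify $[n]\wedge[m]$ with $[nm]$ via $i\wedge j\mapsto (j-1)n+i$. A $\Gamma$-ring is a $\Gamma$-space $R$ with unit $1\in R[1]$ and associative unital multiplication given by natural maps $R(K)\wedge R(L)\to R(K\wedge L)$, $p\wedge q\mapsto pq$; $0\in R[1]$ denotes the basepoint. For $x\in R[2]$, $x^k\in R[2^k]$ is the $k$-fold product. For $\mathcal C$ with zero object and finite coproducts, $X\wedge[k]=X\sqcup\dots\sqcup X$ ($k$ copies; indexed by $\{1,\dots,k\}$, $X\wedge[0]=0$), functorial in pointed maps of $[k]$ (index $0$ going to the zero object). The endomorphism $\Gamma$-ring is $End_{\mathcal C}(X)[k]=Hom_{\mathcal C}(X,X\wedge[k])$ (pointed at the zero map), with unit $\mathrm{id}_X\in End_{\mathcal C}(X)[1]$ and multiplication $f\wedge g\mapsto (f\wedge[l])\circ g$ for $f\in End_{\mathcal C}(X)[k]$, $g\in End_{\mathcal C}(X)[l]$. Maps: $p^n_i:[n]\to[n-1]$, $p^n_i(j)=j$ ($j<i$), $p^n_i(i)=0$, $p^n_i(j)=j-1$ ($j>i$); for $1\le i<j\le n$ and $1\le k\le n-1$, $s^n_{i,j,k}:[n]\to[n-1]$ sends $0\mapsto0$, $i,j\mapsto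 k$, and the remaining elements order-preservingly and bijectively onto $\{1,\dots,n-1\}\setminus\{k\}$; $d^n_j:[n-1]\to[n]$ is the order-preserving injection missing $j$. $H\mathbb{Z}$ is the $\Gamma$-ring with $H\mathbb{Z}(K)=\tilde{\mathbb Z}[K]$ the reduced free abelian group on $K$, pointed maps acting by summing coefficients along fibres, unit the inclusion of generators, multiplication $(\sum a_k k)(\sum b_l l)=\sum a_kb_l (k\wedge l)$; $\pm1_n=(1,-1)^n\in H\mathbb{Z}[2^n]$. For $k\ge1$, split $\{1,\dots,2^k\}=A_+\sqcup A_-$ where $i\in A_+$ iff the binary expansion of $i-1$ has an even number of digits $1$. The special action of $\Sigma_{2^{k-1}}\times\Sigma_{2^{k-1}}$ on $F[2^k]$ is the action of the group of permutations of $\{1,\dots,2^k\}$ preserving $A_+$ and $A_-$. Let $\sigma$ be the nontrivial element of $\Sigma_2$. A formal difference law in $R$ is $r\in R[2]$ such that: (1) $p^2_2(r)=1$ and $s^2_{1,2,1}(r)=0$; (2) $p^2_1(r)\,r=r\,p^2_1(r)=\sigma(r)$ in $R[2]$; (3) for every $k\ge1$, $r^k$ is fixed under the special action; (4) for every $k\ge1$, all $1\le i<j\le 2^k$ with one of $i,j$ in $A_+$ and the other in $A_-$, and all $1\le l\le 2^k-1$: $s^{2^k}_{i,j,l}(r^k)=d^{2^k-1}_l\,p^{2^k-1}_i\,p^{2^k}_j(r^k)$. *)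

theory Defs
  imports Main
begin

record ('o,'m) category =
  obj :: "'o set"
  arr :: "'m set"
  cdom :: "'m \<Rightarrow> 'o"
  ccod :: "'m \<Rightarrow> 'o"
  cmp :: "'m \<Rightarrow> 'm \<Rightarrow> 'm"   \<comment> \<open>cmp C g f = g o f\<close>
  idm :: "'o \<Rightarrow> 'm"

definition hom :: "('o,'m) category \<Rightarrow> 'o \<Rightarrow> 'o \<Rightarrow> 'm set" where
  "hom C a b = {f \<in> arr C. cdom C f = a \<and> ccod C f = b}"

definition is_category :: "('o,'m) category \<Rightarrow> bool" where
  "is_category C \<longleftrightarrow>
     (\<forall>f\<in>arr C. cdom C f \<in> obj C \<and> ccod C f \<in> obj C) \<and>
     (\<forall>a\<in>obj C. idm C a \<in> hom C a a) \<and>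
     (\<forall>f\<in>arr C. \<forall>g\<in>arr C. ccod C f = cdom C g \<longrightarrow>
         cmp C g f \<in> hom C (cdom C f) (ccod C g)) \<and>
     (\<forall>f\<in>arr C. cmp C (idm C (ccod C f)) f = f \<and> cmp C f (idm C (cdom C f)) = f) \<and>
     (\<forall>f\<in>arr C. \<forall>g\<in>arr C. \<forall>h\<in>arr C. ccod C f = cdom C g \<and> ccod C g = cdom C h \<longrightarrow>
         cmp C h (cmp C g f) = cmp C (cmp C h g) f)"

definition is_zero_object :: "('o,'m) category \<Rightarrow> 'o \<Rightarrow> bool" where
  "is_zero_object C z \<longleftrightarrow> z \<in> obj C \<and>
     (\<forall>a\<in>obj C. (\<exists>!f. f \<in> hom C a z) \<and> (\<exists>!f. f \<in> hom C z a))"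

definition has_zero_object :: "('o,'m) category \<Rightarrow> bool" where
  "has_zero_object C \<longleftrightarrow> (\<exists>z. is_zero_object C z)"

definition is_coproduct ::
  "('o,'m) category \<Rightarrow> (nat \<Rightarrow> 'o) \<Rightarrow> nat \<Rightarrow> 'o \<Rightarrow> (nat \<Rightarrow> 'm) \<Rightarrow> bool" where
  "is_coproduct C A k P ins \<longleftrightarrow> P \<in> obj C \<and>
     (\<forall>i\<in>{1..k}. ins i \<in> hom C (A i) P) \<and>
     (\<forall>Y\<in>obj C. \<forall>h. (\<forall>i\<in>{1..k}. h i \<in> hom C (A i) Y) \<longrightarrow>
        (\<exists>!u. u \<in> hom C P Y \<and> (\<forall>i\<in>{1..k}. cmp C u (ins i) = h i)))"

definition has_finite_coproducts :: "('o,'m) category \<Rightarrow> bool" where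
  "has_finite_coproducts C \<longleftrightarrow>
     (\<forall>k A. (\<forall>i\<in>{1..k}. A i \<in> obj C) \<longrightarrow> (\<exists>P ins. is_coproduct C A k P ins))"

section \<open>Chosen powers X /\ [k] = Pw k with injections ins k i, and induced maps\<close>

definition copair ::
  "('o,'m) category \<Rightarrow> (nat \<Rightarrow> 'o) \<Rightarrow> (nat \<Rightarrow> nat \<Rightarrow> 'm) \<Rightarrow> nat \<Rightarrow> 'o \<Rightarrow> (nat \<Rightarrow> 'm) \<Rightarrow> 'm" where
  "copair C Pw ins k Y h =
     (THE u. u \<in> hom C (Pw k) Y \<and> (\<forall>i\<in>{1..k}. cmp C u (ins k i) = h i))"

definition zmor :: "('o,'m) category \<Rightarrow> 'o \<Rightarrow> 'o \<Rightarrow> 'm" where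
  "zmor C a b = (THE f. f \<in> hom C a b \<and>
     (\<exists>z g h. is_zero_object C z \<and> g \<in> hom C a z \<and> h \<in> hom C z b \<and> f = cmp C h g))"

text \<open>The map X /\ [k] -> X /\ [l] induced by a pointed map f : [k] -> [l].\<close>
definition indmap ::
  "('o,'m) category \<Rightarrow> 'o \<Rightarrow> (nat \<Rightarrow> 'o) \<Rightarrow> (nat \<Rightarrow> nat \<Rightarrow> 'm) \<Rightarrow> nat \<Rightarrow> nat \<Rightarrow> (nat \<Rightarrow> nat) \<Rightarrow> 'm" where
  "indmap C X Pw ins k l f =
     copair C Pw ins k (Pw l) (\<lambda>i. if f i = 0 then zmor C X (Pw l) else ins l (f i))"

text \<open>Gamma-space structure of End(X): f acting on x in End(X)[k] = Hom(X, X /\ [k]).\<close>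
definition gact ::
  "('o,'m) category \<Rightarrow> 'o \<Rightarrow> (nat \<Rightarrow> 'o) \<Rightarrow> (nat \<Rightarrow> nat \<Rightarrow> 'm) \<Rightarrow> nat \<Rightarrow> nat \<Rightarrow> (nat \<Rightarrow> nat) \<Rightarrow> 'm \<Rightarrow> 'm" where
  "gact C X Pw ins k l f x = cmp C (indmap C X Pw ins k l f) x"

text \<open>Multiplication End[k] /\ End[l] -> End[kl], f /\ g |-> (f /\ [l]) o g, using the
  identification i /\ j |-> (j-1)k + i.\<close>
definition emul ::
  "('o,'m) category \<Rightarrow> 'o \<Rightarrow> (nat \<Rightarrow> 'o) \<Rightarrow> (nat \<Rightarrow> nat \<Rightarrow> 'm) \<Rightarrow> nat \<Rightarrow> nat \<Rightarrow> 'm \<Rightarrow> 'm \<Rightarrow> 'm" where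
  "emul C X Pw ins k l f g =
     cmp C (copair C Pw ins l (Pw (k * l))
              (\<lambda>j. gact C X Pw ins k (k * l) (\<lambda>i. if i = 0 then 0 else (j - 1) * k + i) f)) g"

text \<open>rpow n = r^n in End[2^n] (rpow 0 is the unit id_X in End[1]).\<close>
primrec rpow ::
  "('o,'m) category \<Rightarrow> 'o \<Rightarrow> (nat \<Rightarrow> 'o) \<Rightarrow> (nat \<Rightarrow> nat \<Rightarrow> 'm) \<Rightarrow> 'm \<Rightarrow> nat \<Rightarrow> 'm" where
  "rpow C X Pw ins r 0 = idm C X"
| "rpow C X Pw ins r (Suc n) = emul C X Pw ins (2 ^ n) 2 (rpow C X Pw ins r n) r"

definition pmap :: "nat \<Rightarrow> nat \<Rightarrow> nat \<Rightarrow> nat" where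
  "pmap n i x = (if x < i then x else if x = i then 0 else x - 1)"

definition smap :: "nat \<Rightarrow> nat \<Rightarrow> nat \<Rightarrow> nat \<Rightarrow> nat \<Rightarrow> nat" where
  "smap n i j k x =
     (if x = 0 then 0 else if x = i \<or> x = j then k
      else (let q = x - card {y \<in> {i, j}. y < x} in if q < k then q else q + 1))"

definition dmap :: "nat \<Rightarrow> nat \<Rightarrow> nat \<Rightarrow> nat" where
  "dmap n j x = (if x < j then x else x + 1)"

definition swap2 :: "nat \<Rightarrow> nat" where
  "swap2 x = (if x = 1 then 2 else if x = 2 then 1 else x)"

fun bitcount :: "nat \<Rightarrow> nat" where
  "bitcount n = (if n = 0 then 0 else n mod 2 + bitcount (n div 2))"

definition in_Aplus :: "nat \<Rightarrow> nat \<Rightarrow> bool" where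
  "in_Aplus k i \<longleftrightarrow> i \<in> {1..2 ^ k} \<and> even (bitcount (i - 1))"

definition in_Aminus :: "nat \<Rightarrow> nat \<Rightarrow> bool" where
  "in_Aminus k i \<longleftrightarrow> i \<in> {1..2 ^ k} \<and> odd (bitcount (i - 1))"

definition special_perm :: "nat \<Rightarrow> (nat \<Rightarrow> nat) \<Rightarrow> bool" where
  "special_perm k \<pi> \<longleftrightarrow> \<pi> 0 = 0 \<and> bij_betw \<pi> {1..2 ^ k} {1..2 ^ k} \<and>
     \<pi> ` {i. in_Aplus k i} = {i. in_Aplus k i} \<and> \<pi> ` {i. in_Aminus k i} = {i. in_Aminus k i}"

definition formal_difference_law ::
  "('o,'m) category \<Rightarrow> 'o \<Rightarrow> (nat \<Rightarrow> 'o) \<Rightarrow> (nat \<Rightarrow> nat \<Rightarrow> 'm) \<Rightarrow> 'm \<Rightarrow> bool" where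
  "formal_difference_law C X Pw ins r \<longleftrightarrow>
     \<comment> \<open>(1)\<close>
     gact C X Pw ins 2 1 (pmap 2 2) r = idm C X \<and>
     gact C X Pw ins 2 1 (smap 2 1 2 1) r = zmor C X (Pw 1) \<and>
     \<comment> \<open>(2)\<close>
     emul C X Pw ins 1 2 (gact C X Pw ins 2 1 (pmap 2 1) r) r = gact C X Pw ins 2 2 swap2 r \<and>
     emul C X Pw ins 2 1 r (gact C X Pw ins 2 1 (pmap 2 1) r) = gact C X Pw ins 2 2 swap2 r \<and>
     \<comment> \<open>(3)\<close>
     (\<forall>k \<ge> 1. \<forall>\<pi>. special_perm k \<pi> \<longrightarrow>
        gact C X Pw ins (2 ^ k) (2 ^ k) \<pi> (rpow C X Pw ins r k) = rpow C X Pw ins r k) \<and>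
     \<comment> \<open>(4)\<close>
     (\<forall>k \<ge> 1. \<forall>i j l. 1 \<le> i \<and> i < j \<and> j \<le> 2 ^ k \<and>
        ((in_Aplus k i \<and> in_Aminus k j) \<or> (in_Aminus k i \<and> in_Aplus k j)) \<and>
        1 \<le> l \<and> l \<le> 2 ^ k - 1 \<longrightarrow>
        gact C X Pw ins (2 ^ k) (2 ^ k - 1) (smap (2 ^ k) i j l) (rpow C X Pw ins r k) =
        gact C X Pw ins (2 ^ k - 2) (2 ^ k - 1) (dmap (2 ^ k - 1) l)
          (gact C X Pw ins (2 ^ k - 1) (2 ^ k - 2) (pmap (2 ^ k - 1) i)
            (gact C X Pw ins (2 ^ k) (2 ^ k - 1) (pmap (2 ^ k) j) (rpow C X Pw ins r k))))"

definition copair2 ::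
  "('o,'m) category \<Rightarrow> (nat \<Rightarrow> 'o) \<Rightarrow> (nat \<Rightarrow> nat \<Rightarrow> 'm) \<Rightarrow> 'o \<Rightarrow> 'm \<Rightarrow> 'm \<Rightarrow> 'm" where
  "copair2 C Pw ins Y f g = copair C Pw ins 2 Y (\<lambda>i. if i = 1 then f else g)"

text \<open>w : X -> X |_| X is the coaddition, \<nu> : X -> X the co-inverse, and the counit is the
  (unique) map X -> 0, so that (counit |_| id) o w = id reads [0, id] o w = id, etc.\<close>
definition abelian_cogroup ::
  "('o,'m) category \<Rightarrow> 'o \<Rightarrow> (nat \<Rightarrow> 'o) \<Rightarrow> (nat \<Rightarrow> nat \<Rightarrow> 'm) \<Rightarrow> 'm \<Rightarrow> 'm \<Rightarrow> bool" where
  "abelian_cogroup C X Pw ins w \<nu> \<longleftrightarrow>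
     w \<in> hom C X (Pw 2) \<and> \<nu> \<in> hom C X X \<and>
     \<comment> \<open>coassociativity\<close>
     cmp C (copair2 C Pw ins (Pw 3)
              (cmp C (copair2 C Pw ins (Pw 3) (ins 3 1) (ins 3 2)) w) (ins 3 3)) w =
     cmp C (copair2 C Pw ins (Pw 3)
              (ins 3 1) (cmp C (copair2 C Pw ins (Pw 3) (ins 3 2) (ins 3 3)) w)) w \<and>
     \<comment> \<open>counit (the zero morphism)\<close>
     cmp C (copair2 C Pw ins X (zmor C X X) (idm C X)) w = idm C X \<and>
     cmp C (copair2 C Pw ins X (idm C X) (zmor C X X)) w = idm C X \<and>
     \<comment> \<open>co-inverse\<close>
     cmp C (copair2 C Pw ins X \<nu> (idm C X)) w = zmor C X X \<and>
     cmp C (copair2 C Pw ins X (idm C X) \<nu>) w = zmor C X X \<and>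
     \<comment> \<open>cocommutativity\<close>
     cmp C (copair2 C Pw ins (Pw 2) (ins 2 2) (ins 2 1)) w = w"

definition cg_add ::
  "('o,'m) category \<Rightarrow> (nat \<Rightarrow> 'o) \<Rightarrow> (nat \<Rightarrow> nat \<Rightarrow> 'm) \<Rightarrow> 'm \<Rightarrow> 'o \<Rightarrow> 'm \<Rightarrow> 'm \<Rightarrow> 'm" where
  "cg_add C Pw ins w Y f g = cmp C (copair2 C Pw ins Y f g) w"

primrec cg_nmul ::
  "('o,'m) category \<Rightarrow> 'o \<Rightarrow> (nat \<Rightarrow> 'o) \<Rightarrow> (nat \<Rightarrow> nat \<Rightarrow> 'm) \<Rightarrow> 'm \<Rightarrow> 'o \<Rightarrow> nat \<Rightarrow> 'm \<Rightarrow> 'm" where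
  "cg_nmul C X Pw ins w Y 0 g = zmor C X Y"
| "cg_nmul C X Pw ins w Y (Suc n) g = cg_add C Pw ins w Y (cg_nmul C X Pw ins w Y n g) g"

definition cg_zmul ::
  "('o,'m) category \<Rightarrow> 'o \<Rightarrow> (nat \<Rightarrow> 'o) \<Rightarrow> (nat \<Rightarrow> nat \<Rightarrow> 'm) \<Rightarrow> 'm \<Rightarrow> 'm \<Rightarrow> 'o \<Rightarrow> int \<Rightarrow> 'm \<Rightarrow> 'm" where
  "cg_zmul C X Pw ins w \<nu> Y a g =
     (if 0 \<le> a then cg_nmul C X Pw ins w Y (nat a) g
      else cg_nmul C X Pw ins w Y (nat (- a)) (cmp C g \<nu>))"

definition cg_map ::
  "('o,'m) category \<Rightarrow> 'o \<Rightarrow> (nat \<Rightarrow> 'o) \<Rightarrow> (nat \<Rightarrow> nat \<Rightarrow> 'm) \<Rightarrow> 'm \<Rightarrow> 'm \<Rightarrow> nat \<Rightarrow> (nat \<Rightarrow> int) \<Rightarrow> 'm" where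
  "cg_map C X Pw ins w \<nu> k a =
     foldr (\<lambda>i acc. cg_add C Pw ins w (Pw k) acc (cg_zmul C X Pw ins w \<nu> (Pw k) (a i) (ins k i)))
       [1..<k+1] (zmor C X (Pw k))"

text \<open>Elements of HZ[n] = reduced free abelian group on [n] are coefficient functions
  a : nat => int (only the values on {1..n} matter).\<close>
definition hz_act :: "nat \<Rightarrow> (nat \<Rightarrow> nat) \<Rightarrow> (nat \<Rightarrow> int) \<Rightarrow> nat \<Rightarrow> int" where
  "hz_act n f a = (\<lambda>y. if y = 0 then 0 else (\<Sum>x\<in>{1..n}. if f x = y then a x else 0))"

definition hz_mul :: "nat \<Rightarrow> nat \<Rightarrow> (nat \<Rightarrow> int) \<Rightarrow> (nat \<Rightarrow> int) \<Rightarrow> nat \<Rightarrow> int" where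
  "hz_mul k l a b = (\<lambda>x. \<Sum>i\<in>{1..k}. \<Sum>j\<in>{1..l}. if (j - 1) * k + i = x then a i * b j else 0)"

primrec pm1 :: "nat \<Rightarrow> nat \<Rightarrow> int" where
  "pm1 0 = (\<lambda>x. if x = 1 then 1 else 0)"
| "pm1 (Suc n) = hz_mul (2 ^ n) 2 (pm1 n) (\<lambda>x. if x = 1 then 1 else if x = 2 then -1 else 0)"

end

theory Submission
  imports Defs
begin

text \<open>
  Everything is organised around push-forwards a_*(r^n) of the powers of r along labellings a of
  {1..2^n} by [k]. On the HZ side a_*(\<plusminus>1_n) is the signed count of a: the number of A_+-points
  minus the number of A_--points in each fibre. The heart of the proof is that, for n \<ge> 1,
  a_*(r^n) depends only on this signed count: axiom (4) lets one kill a pair of opposite-sign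
  points with a common label, which reduces any labelling to a separated one, and two separated
  labellings with the same signed count differ by a special permutation, under which r^n is
  invariant by axiom (3). Together with the recursion r^(n+1) = [r^n, r^n] o r, read as
  "glueing two labellings yields the r-difference [A, B] o r of their push-forwards", and with
  axiom (1), which makes 0 a right unit for this difference, every morphism built from
  injections, zero, the coaddition and the co-inverse is represented by an element of HZ, and
  morphisms with equal representatives coincide. Each cogroup axiom and the comparison of the
  two maps out of HZ then reduce to identities in HZ.
\<close>

text \<open>The defining equation of bitcount would unfold forever, and pm1 is only unfolded through
  its recursion lemma below.\<close>
declare bitcount.simps[simp del] pm1.simps(2)[simp del]

section \<open>Signed fibre counts in the Gamma-ring HZ\<close>

lemma pm1_Suc:
  "pm1 (Suc n) x = (if x \<in> {1..2 ^ n} then pm1 n x else 0) +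
     (if 2 ^ n < x \<and> x - 2 ^ n \<in> {1..2 ^ n} then - pm1 n (x - 2 ^ n) else 0)"
proof -
  have two: "(\<Sum>j\<in>{1..2::nat}. g j) = g 1 + g 2" for g :: "nat \<Rightarrow> int"
    by (simp add: numeral_2_eq_2)
  have "pm1 (Suc n) x = (\<Sum>i\<in>{1..2 ^ n}. (if i = x then pm1 n i else 0) +
                                          (if 2 ^ n + i = x then - pm1 n i else 0))"
    unfolding pm1.simps(2) hz_mul_def two by (rule sum.cong) simp_all
  also have "\<dots> = (\<Sum>i\<in>{1..2 ^ n}. if i = x then pm1 n i else 0) +
                  (\<Sum>i\<in>{1..2 ^ n}. if 2 ^ n + i = x then - pm1 n i else 0)"
    by (rule sum.distrib)
  also have "(\<Sum>i\<in>{1..2 ^ n}. if i = x then pm1 n i else 0) = (if x \<in> {1..2 ^ n} then pm1 n x else 0)"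
    by simp
  also have "(\<Sum>i\<in>{1..2 ^ n}. if 2 ^ n + i = x then - pm1 n i else 0) =
       (if 2 ^ n < x \<and> x - 2 ^ n \<in> {1..2 ^ n} then - pm1 n (x - 2 ^ n) else 0)"
  proof (cases "2 ^ n < x")
    case True
    then have "\<And>i. (2 ^ n + i = x) = (i = x - 2 ^ n)" by auto
    then show ?thesis using True by simp
  next
    case False
    then have "\<And>i. i \<in> {1..2 ^ n} \<Longrightarrow> 2 ^ n + i \<noteq> x" by auto
    then show ?thesis using False by simp
  qed
  finally show ?thesis .
qed

lemma pm1_low: "x \<in> {1..2 ^ n} \<Longrightarrow> pm1 (Suc n) x = pm1 n x"
  by (simp add: pm1_Suc)

lemma pm1_high: "x \<in> {1..2 ^ n} \<Longrightarrow> pm1 (Suc n) (x + 2 ^ n) = - pm1 n x"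
  by (simp add: pm1_Suc)

lemma bitcount_0: "bitcount 0 = 0"
  by (subst bitcount.simps) simp

lemma bitcount_eq: "bitcount m = m mod 2 + bitcount (m div 2)"
  by (cases "m = 0") (simp add: bitcount_0, subst bitcount.simps, simp)

lemma bitcount_add_pow2: "m < 2 ^ n \<Longrightarrow> bitcount (2 ^ n + m) = Suc (bitcount m)"
proof (induction n arbitrary: m)
  case 0
  then show ?case using bitcount_eq[of 1] bitcount_0 by simp
next
  case (Suc n)
  have "bitcount (2 ^ n + m div 2) = Suc (bitcount (m div 2))"
    using Suc by (intro Suc.IH) auto
  moreover have "(2 ^ Suc n + m) div 2 = 2 ^ n + m div 2" by simp
  ultimately show ?case using bitcount_eq[of "2 ^ Suc n + m"] bitcount_eq[of m] by simp
qed

lemma pm1_sign: "x \<in> {1..2 ^ n} \<Longrightarrow> pm1 n x = (if in_Aplus n x then 1 else -1)"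
proof (induction n arbitrary: x)
  case 0
  then show ?case by (simp add: in_Aplus_def bitcount_0)
next
  case (Suc n)
  show ?case
  proof (cases "x \<le> 2 ^ n")
    case True
    then have x: "x \<in> {1..2 ^ n}" using Suc.prems by auto
    then show ?thesis using pm1_low[OF x] Suc.IH[OF x] by (auto simp: in_Aplus_def)
  next
    case False
    define x0 where "x0 = x - 2 ^ n"
    have x0: "x0 \<in> {1..2 ^ n}" and x: "x = x0 + 2 ^ n"
      using Suc.prems False unfolding x0_def by auto
    have "x - 1 = 2 ^ n + (x0 - 1)" using x x0 by auto
    then have "bitcount (x - 1) = Suc (bitcount (x0 - 1))"
      using bitcount_add_pow2[of "x0 - 1" n] x0 by auto
    then show ?thesis using pm1_high[OF x0] Suc.IH[OF x0] x x0 Suc.prems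
      by (auto simp: in_Aplus_def)
  qed
qed

text \<open>A labelling a of {1..2^n} by elements of [k] pushes the n-th power of (1,-1) forward to
  an element of HZ[k]; its coefficient at y counts the A_+-points of the fibre over y minus the
  A_--points.\<close>
definition signed_count :: "nat \<Rightarrow> (nat \<Rightarrow> nat) \<Rightarrow> nat \<Rightarrow> int" where
  "signed_count n a = hz_act (2 ^ n) a (pm1 n)"

definition glue :: "nat \<Rightarrow> (nat \<Rightarrow> nat) \<Rightarrow> (nat \<Rightarrow> nat) \<Rightarrow> nat \<Rightarrow> nat" where
  "glue n a b x = (if x \<le> 2 ^ n then a x else b (x - 2 ^ n))"

definition maps_into :: "nat \<Rightarrow> nat \<Rightarrow> (nat \<Rightarrow> nat) \<Rightarrow> bool" where
  "maps_into k l f \<longleftrightarrow> (\<forall>x\<in>{1..k}. f x \<le> l)"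

lemma maps_into_glue:
  assumes "maps_into (2 ^ n) k a" "maps_into (2 ^ n) k b"
  shows "maps_into (2 ^ Suc n) k (glue n a b)"
  unfolding maps_into_def glue_def
proof
  fix x :: nat assume x: "x \<in> {1..2 ^ Suc n}"
  show "(if x \<le> 2 ^ n then a x else b (x - 2 ^ n)) \<le> k"
  proof (cases "x \<le> 2 ^ n")
    case False
    then have "x - 2 ^ n \<in> {1..2 ^ n}" using x by auto
    then show ?thesis using assms False by (auto simp: maps_into_def)
  qed (use assms x in \<open>auto simp: maps_into_def\<close>)
qed

definition pcomp :: "(nat \<Rightarrow> nat) \<Rightarrow> (nat \<Rightarrow> nat) \<Rightarrow> nat \<Rightarrow> nat" where
  "pcomp g f = (\<lambda>x. if f x = 0 then 0 else g (f x))"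

lemma maps_into_pcomp: "maps_into k l f \<Longrightarrow> maps_into l m g \<Longrightarrow> maps_into k m (pcomp g f)"
  unfolding maps_into_def pcomp_def by (auto simp: Suc_le_eq)

text \<open>Signed counts turn glueing into subtraction, since the second half of the n+1-st power of
  (1,-1) carries the opposite signs.\<close>
lemma signed_count_glue: "signed_count (Suc n) (glue n a b) y = signed_count n a y - signed_count n b y"
proof (cases "y = 0")
  case True then show ?thesis by (simp add: signed_count_def hz_act_def)
next
  case False
  let ?f = "\<lambda>x. if glue n a b x = y then pm1 (Suc n) x else 0"
  have halves: "{1..2 ^ Suc n} = {1..2 ^ n} \<union> {1 + 2 ^ n..2 ^ n + (2::nat) ^ n}" by auto
  have "sum ?f {1..2 ^ Suc n} = sum ?f {1..2 ^ n} + sum ?f {1 + 2 ^ n..2 ^ n + 2 ^ n}"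
    unfolding halves by (rule sum.union_disjoint) auto
  also have "sum ?f {1 + 2 ^ n..2 ^ n + 2 ^ n} = (\<Sum>x\<in>{1..2 ^ n}. ?f (x + 2 ^ n))"
    by (rule sum.shift_bounds_cl_nat_ivl)
  also have "\<dots> = (\<Sum>x\<in>{1..2 ^ n}. - (if b x = y then pm1 n x else 0))"
    by (rule sum.cong) (auto simp: glue_def pm1_high)
  also have "sum ?f {1..2 ^ n} = (\<Sum>x\<in>{1..2 ^ n}. if a x = y then pm1 n x else 0)"
    by (rule sum.cong) (auto simp: glue_def pm1_low)
  finally show ?thesis using False by (simp add: signed_count_def hz_act_def sum_negf)
qed

lemma signed_count_zero: "signed_count n (\<lambda>_. 0) = (\<lambda>_. 0)"
  by (auto simp: signed_count_def hz_act_def)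

lemma signed_count_point: "i \<noteq> 0 \<Longrightarrow> signed_count 0 (\<lambda>_. i) = (\<lambda>y. if y = i then 1 else 0)"
  by (auto simp: signed_count_def hz_act_def)

lemma signed_count_support:
  assumes "maps_into (2 ^ n) k a" "y \<notin> {1..k}"
  shows "signed_count n a y = 0"
proof (cases "y = 0")
  case False
  then have "\<forall>x\<in>{1..2 ^ n}. a x \<noteq> y" using assms by (fastforce simp: maps_into_def)
  then show ?thesis by (simp add: signed_count_def hz_act_def)
qed (simp add: signed_count_def hz_act_def)

lemma signed_count_card:
  assumes "y \<noteq> 0"
  shows "signed_count n a y =
    int (card {x. in_Aplus n x \<and> a x = y}) - int (card {x. in_Aminus n x \<and> a x = y})"
proof -
  have ind: "(\<Sum>x\<in>S. if P x then (1::int) else 0) = int (card {x\<in>S. P x})" if "finite S" for S :: "nat set" and P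
    using that by (simp add: sum.inter_filter[symmetric])
  have "signed_count n a y = (\<Sum>x\<in>{1..2 ^ n}.
      (if in_Aplus n x \<and> a x = y then 1 else 0) - (if in_Aminus n x \<and> a x = y then 1 else 0))"
    unfolding signed_count_def hz_act_def using assms
    by (auto intro!: sum.cong simp: pm1_sign in_Aminus_def in_Aplus_def)
  also have "\<dots> = int (card {x\<in>{1..2 ^ n}. in_Aplus n x \<and> a x = y}) -
                  int (card {x\<in>{1..2 ^ n}. in_Aminus n x \<and> a x = y})"
    by (simp add: sum_subtractf ind)
  also have "{x\<in>{1..2 ^ n}. in_Aplus n x \<and> a x = y} = {x. in_Aplus n x \<and> a x = y}"
    by (auto simp: in_Aplus_def)
  also have "{x\<in>{1..2 ^ n}. in_Aminus n x \<and> a x = y} = {x. in_Aminus n x \<and> a x = y}"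
    by (auto simp: in_Aminus_def)
  finally show ?thesis .
qed

lemma signed_count_cancel:
  assumes i: "in_Aplus n i" and j: "in_Aminus n j" and aij: "a i = a j"
  shows "signed_count n (\<lambda>x. if x = i \<or> x = j then 0 else a x) = signed_count n a"
proof
  fix y
  show "signed_count n (\<lambda>x. if x = i \<or> x = j then 0 else a x) y = signed_count n a y"
  proof (cases "y = 0")
    case True then show ?thesis by (simp add: signed_count_def hz_act_def)
  next
    case False
    let ?S = "{1..(2::nat) ^ n}"
    have iS: "i \<in> ?S" and jS: "j \<in> ?S - {i}" and pi: "pm1 n i = 1" and pj: "pm1 n j = -1"
      using i j pm1_sign[of i n] pm1_sign[of j n] by (auto simp: in_Aplus_def in_Aminus_def)
    have split: "sum f ?S = f i + (f j + sum f (?S - {i} - {j}))" for f :: "nat \<Rightarrow> int"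
      using sum.remove[OF _ iS, of f] sum.remove[OF _ jS, of f] by simp
    let ?g = "\<lambda>x. if (if x = i \<or> x = j then 0 else a x) = y then pm1 n x else 0"
    let ?f = "\<lambda>x. if a x = y then pm1 n x else 0"
    have "sum ?g (?S - {i} - {j}) = sum ?f (?S - {i} - {j})" by (rule sum.cong) auto
    moreover have "?g i = 0" "?g j = 0" "?f i + ?f j = 0" using False aij pi pj by auto
    ultimately have "sum ?g ?S = sum ?f ?S" using split[of ?g] split[of ?f] by simp
    then show ?thesis using False by (simp add: signed_count_def hz_act_def)
  qed
qed

definition separated :: "nat \<Rightarrow> (nat \<Rightarrow> nat) \<Rightarrow> bool" where
  "separated n b \<longleftrightarrow> (\<forall>i j. in_Aplus n i \<longrightarrow> in_Aminus n j \<longrightarrow> b i = b j \<longrightarrow> b i = 0)"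

lemma separated_fibre_card:
  assumes sep: "separated n b" and y: "y \<noteq> 0"
  shows "card {x. in_Aplus n x \<and> b x = y} = nat (signed_count n b y)"
    and "card {x. in_Aminus n x \<and> b x = y} = nat (- signed_count n b y)"
proof -
  have "{x. in_Aplus n x \<and> b x = y} = {} \<or> {x. in_Aminus n x \<and> b x = y} = {}"
  proof (rule ccontr)
    assume "\<not> ?thesis"
    then obtain i j where "in_Aplus n i" "b i = y" "in_Aminus n j" "b j = y" by blast
    then show False using sep y unfolding separated_def by metis
  qed
  then have "card {x. in_Aplus n x \<and> b x = y} = 0 \<or> card {x. in_Aminus n x \<and> b x = y} = 0"
    by (metis card.empty)
  then show "card {x. in_Aplus n x \<and> b x = y} = nat (signed_count n b y)"
    and "card {x. in_Aminus n x \<and> b x = y} = nat (- signed_count n b y)"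
    using signed_count_card[OF y, of n b] by auto
qed

lemma same_fibres_perm:
  fixes f g :: "'a \<Rightarrow> nat"
  assumes fin: "finite S" and bf: "\<forall>x\<in>S. f x \<le> k" and bg: "\<forall>x\<in>S. g x \<le> k"
    and nonzero: "\<forall>y. y \<noteq> 0 \<longrightarrow> card {x\<in>S. f x = y} = card {x\<in>S. g x = y}"
  shows "\<exists>\<pi>. bij_betw \<pi> S S \<and> (\<forall>x\<in>S. f (\<pi> x) = g x)"
proof -
  have total: "card S = card {x\<in>S. h x = 0} + (\<Sum>y\<in>{1..k}. card {x\<in>S. h x = y})"
    if "\<forall>x\<in>S. h x \<le> k" for h :: "'a \<Rightarrow> nat"
  proof -
    have "S = (\<Union>y\<in>{0..k}. {x\<in>S. h x = y})" using that by auto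
    then have "card S = (\<Sum>y\<in>{0..k}. card {x\<in>S. h x = y})"
      using card_UN_disjoint[of "{0..k}" "\<lambda>y. {x\<in>S. h x = y}"] fin by auto
    then show ?thesis by (simp add: sum.atLeast_Suc_atMost)
  qed
  have "(\<Sum>y\<in>{1..k}. card {x\<in>S. f x = y}) = (\<Sum>y\<in>{1..k}. card {x\<in>S. g x = y})"
    using nonzero by (intro sum.cong) auto
  then have "card {x\<in>S. f x = 0} = card {x\<in>S. g x = 0}"
    using total[OF bf] total[OF bg] by simp
  then have "card {x\<in>S. g x = y} = card {x\<in>S. f x = y}" for y
    using nonzero by (cases "y = 0") auto
  then have "\<exists>h. bij_betw h {x\<in>S. g x = y} {x\<in>S. f x = y}" for y
    by (intro finite_same_card_bij) (use fin in simp_all)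
  then obtain H where H: "\<And>y. bij_betw (H y) {x\<in>S. g x = y} {x\<in>S. f x = y}"
    by metis
  define \<pi> where "\<pi> x = H (g x) x" for x
  have img: "\<pi> x \<in> S \<and> f (\<pi> x) = g x" if "x \<in> S" for x
    using bij_betw_apply[OF H, of x "g x"] that unfolding \<pi>_def by simp
  have "inj_on \<pi> S"
  proof (rule inj_onI)
    fix x x' assume x: "x \<in> S" and x': "x' \<in> S" and e: "\<pi> x = \<pi> x'"
    have "g x = g x'" using img[OF x] img[OF x'] e by metis
    then show "x = x'"
      using inj_onD[OF bij_betw_imp_inj_on[OF H[of "g x"]]] x x' e unfolding \<pi>_def by auto
  qed
  moreover have "\<pi> ` S = S"
    using card_subset_eq[OF fin] card_image[OF \<open>inj_on \<pi> S\<close>] img by (metis image_subsetI)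
  ultimately show ?thesis using img unfolding bij_betw_def by blast
qed

lemma separated_special_perm:
  assumes a: "maps_into (2 ^ n) k a" "separated n a"
    and b: "maps_into (2 ^ n) k b" "separated n b"
    and same: "signed_count n a = signed_count n b"
  shows "\<exists>\<pi>. special_perm n \<pi> \<and> (\<forall>x\<in>{1..2 ^ n}. b x = a (\<pi> x))"
proof -
  define P where "P = {x. in_Aplus n x}"
  define M where "M = {x. in_Aminus n x}"
  have PM: "P \<union> M = {1..2 ^ n}" and disj: "P \<inter> M = {}"
    unfolding P_def M_def by (auto simp: in_Aplus_def in_Aminus_def)
  then have fin: "finite P" "finite M" by (metis finite_Un finite_atLeastAtMost)+
  have bounds: "\<forall>x\<in>P. a x \<le> k" "\<forall>x\<in>P. b x \<le> k" "\<forall>x\<in>M. a x \<le> k" "\<forall>x\<in>M. b x \<le> k"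
    using a(1) b(1) PM unfolding maps_into_def by auto
  have "\<forall>y. y \<noteq> 0 \<longrightarrow> card {x\<in>P. a x = y} = card {x\<in>P. b x = y}"
    using separated_fibre_card(1)[OF a(2)] separated_fibre_card(1)[OF b(2)] same
    unfolding P_def by simp
  then obtain \<pi>P where \<pi>P: "bij_betw \<pi>P P P" "\<forall>x\<in>P. a (\<pi>P x) = b x"
    using same_fibres_perm[OF fin(1) bounds(1,2)] by blast
  have "\<forall>y. y \<noteq> 0 \<longrightarrow> card {x\<in>M. a x = y} = card {x\<in>M. b x = y}"
    using separated_fibre_card(2)[OF a(2)] separated_fibre_card(2)[OF b(2)] same
    unfolding M_def by simp
  then obtain \<pi>M where \<pi>M: "bij_betw \<pi>M M M" "\<forall>x\<in>M. a (\<pi>M x) = b x"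
    using same_fibres_perm[OF fin(2) bounds(3,4)] by blast
  define \<pi> where "\<pi> x = (if x \<in> P then \<pi>P x else if x \<in> M then \<pi>M x else x)" for x
  have bP: "bij_betw \<pi> P P"
    using \<pi>P(1) by (rule bij_betw_cong[THEN iffD1, rotated]) (auto simp: \<pi>_def)
  have bM: "bij_betw \<pi> M M"
    using \<pi>M(1) disj by (intro bij_betw_cong[THEN iffD1, OF _ \<pi>M(1)]) (auto simp: \<pi>_def)
  have "special_perm n \<pi>"
    unfolding special_perm_def
  proof (intro conjI)
    show "\<pi> 0 = 0" unfolding \<pi>_def P_def M_def by (auto simp: in_Aplus_def in_Aminus_def)
    show "bij_betw \<pi> {1..2 ^ n} {1..2 ^ n}" using bij_betw_combine[OF bP bM disj] PM by simp
    show "\<pi> ` {i. in_Aplus n i} = {i. in_Aplus n i}" using bij_betw_imp_surj_on[OF bP] unfolding P_def .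
    show "\<pi> ` {i. in_Aminus n i} = {i. in_Aminus n i}" using bij_betw_imp_surj_on[OF bM] unfolding M_def .
  qed
  moreover have "\<forall>x\<in>{1..2 ^ n}. b x = a (\<pi> x)"
    using \<pi>P(2) \<pi>M(2) PM disj unfolding \<pi>_def by auto
  ultimately show ?thesis by blast
qed

locale zero_category =
  fixes C :: "('o,'m) category"
  assumes cat: "is_category C" and zero_obj_ex: "has_zero_object C"
begin

lemma comp_hom: "f \<in> hom C a b \<Longrightarrow> g \<in> hom C b c \<Longrightarrow> cmp C g f \<in> hom C a c"
  using cat unfolding is_category_def hom_def by auto

lemma assoc: "f \<in> hom C a b \<Longrightarrow> g \<in> hom C b c \<Longrightarrow> h \<in> hom C c d \<Longrightarrow>
   cmp C h (cmp C g f) = cmp C (cmp C h g) f"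
  using cat unfolding is_category_def hom_def by auto

lemma id_hom: "a \<in> obj C \<Longrightarrow> idm C a \<in> hom C a a"
  using cat unfolding is_category_def by auto

lemma id_left: "f \<in> hom C a b \<Longrightarrow> cmp C (idm C b) f = f"
  using cat unfolding is_category_def hom_def by auto

lemma id_right: "f \<in> hom C a b \<Longrightarrow> cmp C f (idm C a) = f"
  using cat unfolding is_category_def hom_def by auto

lemma hom_obj: "f \<in> hom C a b \<Longrightarrow> a \<in> obj C \<and> b \<in> obj C"
  using cat unfolding is_category_def hom_def by auto

lemma zero_object_obj: "is_zero_object C z \<Longrightarrow> z \<in> obj C"
  unfolding is_zero_object_def by (elim conjE)

lemma zero_object_maps:
  assumes "is_zero_object C z" "a \<in> obj C"
  shows "\<exists>!f. f \<in> hom C a z" and "\<exists>!f. f \<in> hom C z a"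
  using assms unfolding is_zero_object_def by (elim conjE, blast)+

text \<open>A composite through a zero object does not depend on the zero object or on the maps
  chosen; this is what makes the definite description in the zero morphism well defined.\<close>
lemma zero_composite_indep:
  assumes z: "is_zero_object C z" and z': "is_zero_object C z'" and a: "a \<in> obj C"
    and g: "g \<in> hom C a z" and h: "h \<in> hom C z b" and g': "g' \<in> hom C a z'" and h': "h' \<in> hom C z' b"
  shows "cmp C h g = cmp C h' g'"
proof -
  have b: "b \<in> obj C" using hom_obj[OF h] by simp
  obtain e where e: "e \<in> hom C z z'" using zero_object_maps(1)[OF z' zero_object_obj[OF z]] by blast
  have "cmp C e g = g'"
    using zero_object_maps(1)[OF z' a] comp_hom[OF g e] g' by blast
  moreover have "cmp C h' e = h"
    using zero_object_maps(2)[OF z b] comp_hom[OF e h'] h by blast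
  ultimately show ?thesis using assoc[OF g e h'] by simp
qed

lemma zmor_eq:
  assumes z: "is_zero_object C z" and a: "a \<in> obj C" and g: "g \<in> hom C a z" and h: "h \<in> hom C z b"
  shows "zmor C a b = cmp C h g"
proof -
  have "\<exists>!f. f \<in> hom C a b \<and>
     (\<exists>z g h. is_zero_object C z \<and> g \<in> hom C a z \<and> h \<in> hom C z b \<and> f = cmp C h g)"
  proof
    show "cmp C h g \<in> hom C a b \<and>
     (\<exists>z g' h'. is_zero_object C z \<and> g' \<in> hom C a z \<and> h' \<in> hom C z b \<and> cmp C h g = cmp C h' g')"
      using assms comp_hom by blast
  next
    fix f assume "f \<in> hom C a b \<and>
     (\<exists>z g h. is_zero_object C z \<and> g \<in> hom C a z \<and> h \<in> hom C z b \<and> f = cmp C h g)"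
    then obtain z1 g1 h1 where "is_zero_object C z1" "g1 \<in> hom C a z1" "h1 \<in> hom C z1 b" "f = cmp C h1 g1"
      by blast
    then show "f = cmp C h g" using zero_composite_indep[OF _ z a _ _ g h] by simp
  qed
  then show ?thesis unfolding zmor_def by (rule the1_equality) (use assms comp_hom in blast)
qed

lemma zmor_factor:
  assumes a: "a \<in> obj C" and b: "b \<in> obj C"
  obtains z g h where "is_zero_object C z" "g \<in> hom C a z" "h \<in> hom C z b"
    "zmor C a b = cmp C h g"
proof -
  obtain z where z: "is_zero_object C z" using zero_obj_ex unfolding has_zero_object_def by blast
  obtain g where g: "g \<in> hom C a z" using zero_object_maps(1)[OF z a] by blast
  obtain h where h: "h \<in> hom C z b" using zero_object_maps(2)[OF z b] by blast
  show ?thesis using that[OF z g h] zmor_eq[OF z a g h] by blast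
qed

lemma zmor_hom:
  assumes "a \<in> obj C" "b \<in> obj C"
  shows "zmor C a b \<in> hom C a b"
proof -
  obtain z g h where "g \<in> hom C a z" "h \<in> hom C z b" "zmor C a b = cmp C h g"
    using zmor_factor[OF assms] .
  then show ?thesis using comp_hom by simp
qed

lemma zmor_left:
  assumes f: "f \<in> hom C b c" and a: "a \<in> obj C"
  shows "cmp C f (zmor C a b) = zmor C a c"
proof -
  obtain z g h where zz: "is_zero_object C z" "g \<in> hom C a z" "h \<in> hom C z b" "zmor C a b = cmp C h g"
    using zmor_factor[OF a] hom_obj[OF f] by blast
  show ?thesis
    using zz assoc[OF zz(2,3) f] zmor_eq[OF zz(1) a zz(2) comp_hom[OF zz(3) f]] by simp
qed

lemma zmor_right:
  assumes f: "f \<in> hom C a b" and c: "c \<in> obj C"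
  shows "cmp C (zmor C b c) f = zmor C a c"
proof -
  obtain z g h where zz: "is_zero_object C z" "g \<in> hom C b z" "h \<in> hom C z c" "zmor C b c = cmp C h g"
    using zmor_factor[OF _ c] hom_obj[OF f] by blast
  show ?thesis
    using zz assoc[OF f zz(2,3)] zmor_eq[OF zz(1) _ comp_hom[OF f zz(2)] zz(3)] hom_obj[OF f] by simp
qed

end

locale copowers = zero_category C
  for C :: "('o,'m) category" +
  fixes X :: 'o and Pw :: "nat \<Rightarrow> 'o" and ins :: "nat \<Rightarrow> nat \<Rightarrow> 'm"
  assumes X_obj: "X \<in> obj C"
    and coprod: "\<forall>k. is_coproduct C (\<lambda>_. X) k (Pw k) (ins k)"
    and Pw_1: "Pw 1 = X" and ins_1: "ins 1 1 = idm C X"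
begin

abbreviation "cp k Y h \<equiv> copair C Pw ins k Y h"
abbreviation "cp2 Y f g \<equiv> copair2 C Pw ins Y f g"
abbreviation "zm a b \<equiv> zmor C a b"
abbreviation "imap k l f \<equiv> indmap C X Pw ins k l f"
abbreviation "act k l f x \<equiv> gact C X Pw ins k l f x"

lemma ins_Suc_0: "ins (Suc 0) (Suc 0) = idm C X"
  using ins_1 by simp

lemma Pw_obj: "Pw k \<in> obj C"
  using coprod unfolding is_coproduct_def by blast

lemma ins_hom: "i \<in> {1..k} \<Longrightarrow> ins k i \<in> hom C X (Pw k)"
  using coprod unfolding is_coproduct_def by blast

lemma copair_univ:
  "Y \<in> obj C \<Longrightarrow> \<forall>i\<in>{1..k}. h i \<in> hom C X Y \<Longrightarrow>
   \<exists>!u. u \<in> hom C (Pw k) Y \<and> (\<forall>i\<in>{1..k}. cmp C u (ins k i) = h i)"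
  using coprod unfolding is_coproduct_def by blast

lemma copair:
  assumes "Y \<in> obj C" "\<forall>i\<in>{1..k}. h i \<in> hom C X Y"
  shows "cp k Y h \<in> hom C (Pw k) Y" and "\<forall>i\<in>{1..k}. cmp C (cp k Y h) (ins k i) = h i"
  using theI'[OF copair_univ[OF assms]] unfolding copair_def by simp_all

lemma copair_unique:
  assumes u: "u \<in> hom C (Pw k) Y" and uh: "\<forall>i\<in>{1..k}. cmp C u (ins k i) = h i"
  shows "cp k Y h = u"
proof -
  have "\<forall>i\<in>{1..k}. h i \<in> hom C X Y"
    using uh comp_hom[OF ins_hom u] by auto
  then have "\<exists>!u. u \<in> hom C (Pw k) Y \<and> (\<forall>i\<in>{1..k}. cmp C u (ins k i) = h i)"
    using copair_univ hom_obj[OF u] by blast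
  then show ?thesis unfolding copair_def by (rule the1_equality) (use u uh in blast)
qed

lemma copower_ext:
  assumes "u \<in> hom C (Pw k) Y" "v \<in> hom C (Pw k) Y"
    and "\<forall>i\<in>{1..k}. cmp C u (ins k i) = cmp C v (ins k i)"
  shows "u = v"
proof -
  have "cp k Y (\<lambda>i. cmp C u (ins k i)) = u"
    by (rule copair_unique[OF assms(1)]) simp
  moreover have "cp k Y (\<lambda>i. cmp C u (ins k i)) = v"
    by (rule copair_unique[OF assms(2)]) (use assms(3) in simp)
  ultimately show ?thesis by simp
qed

lemma copair_cong: "\<forall>i\<in>{1..k}. h i = h' i \<Longrightarrow> cp k Y h = cp k Y h'"
proof -
  assume "\<forall>i\<in>{1..k}. h i = h' i"
  then have "\<And>u. (\<forall>i\<in>{1..k}. cmp C u (ins k i) = h i) = (\<forall>i\<in>{1..k}. cmp C u (ins k i) = h' i)"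
    by auto
  then show ?thesis unfolding copair_def by simp
qed

lemma copair_comp:
  assumes g: "g \<in> hom C Y Z" and h: "\<forall>i\<in>{1..k}. h i \<in> hom C X Y"
  shows "cmp C g (cp k Y h) = cp k Z (\<lambda>i. cmp C g (h i))"
proof (rule sym, rule copair_unique)
  have Y: "Y \<in> obj C" using hom_obj[OF g] by auto
  show "cmp C g (cp k Y h) \<in> hom C (Pw k) Z" by (rule comp_hom[OF copair(1)[OF Y h] g])
  show "\<forall>i\<in>{1..k}. cmp C (cmp C g (cp k Y h)) (ins k i) = cmp C g (h i)"
    using assoc[OF ins_hom copair(1)[OF Y h] g] copair(2)[OF Y h] by simp
qed

lemma copair2_hom:
  "Y \<in> obj C \<Longrightarrow> A \<in> hom C X Y \<Longrightarrow> B \<in> hom C X Y \<Longrightarrow> cp2 Y A B \<in> hom C (Pw 2) Y"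
  unfolding copair2_def by (rule copair) auto

lemma copair2_ins:
  assumes "Y \<in> obj C" "A \<in> hom C X Y" "B \<in> hom C X Y"
  shows "cmp C (cp2 Y A B) (ins 2 1) = A" "cmp C (cp2 Y A B) (ins 2 2) = B"
  using copair(2)[OF assms(1), of 2 "\<lambda>i. if i = 1 then A else B"] assms
  unfolding copair2_def by auto

lemma copair2_comp:
  assumes "g \<in> hom C Y Z" "A \<in> hom C X Y" "B \<in> hom C X Y"
  shows "cmp C g (cp2 Y A B) = cp2 Z (cmp C g A) (cmp C g B)"
  unfolding copair2_def using assms by (subst copair_comp) (auto intro!: copair_cong)

lemma copair2_ins_id: "cp2 (Pw 2) (ins 2 1) (ins 2 2) = idm C (Pw 2)"
  unfolding copair2_def
  by (rule copair_unique[OF id_hom[OF Pw_obj]]) (auto simp: id_left[OF ins_hom] numeral_2_eq_2 le_Suc_eq)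

lemma zm_hom: "zm X (Pw l) \<in> hom C X (Pw l)"
  by (rule zmor_hom[OF X_obj Pw_obj])

lemma indmap:
  assumes f: "maps_into k l f"
  shows "imap k l f \<in> hom C (Pw k) (Pw l)"
    and "i \<in> {1..k} \<Longrightarrow> cmp C (imap k l f) (ins k i) = (if f i = 0 then zm X (Pw l) else ins l (f i))"
proof -
  have h: "\<forall>i\<in>{1..k}. (if f i = 0 then zm X (Pw l) else ins l (f i)) \<in> hom C X (Pw l)"
    using f zm_hom ins_hom unfolding maps_into_def by auto
  show "imap k l f \<in> hom C (Pw k) (Pw l)"
    unfolding indmap_def by (rule copair(1)[OF Pw_obj h])
  show "i \<in> {1..k} \<Longrightarrow> cmp C (imap k l f) (ins k i) = (if f i = 0 then zm X (Pw l) else ins l (f i))"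
    unfolding indmap_def using copair(2)[OF Pw_obj h] by blast
qed

lemma indmap_cong: "\<forall>x\<in>{1..k}. f x = g x \<Longrightarrow> imap k l f = imap k l g"
  unfolding indmap_def by (rule copair_cong) simp

lemma comp_indmap:
  assumes h: "h \<in> hom C (Pw l) Y" and g: "maps_into k l g"
  shows "cmp C h (imap k l g) = cp k Y (\<lambda>i. if g i = 0 then zm X Y else cmp C h (ins l (g i)))"
proof (rule sym, rule copair_unique)
  show "cmp C h (imap k l g) \<in> hom C (Pw k) Y" by (rule comp_hom[OF indmap(1)[OF g] h])
  show "\<forall>i\<in>{1..k}. cmp C (cmp C h (imap k l g)) (ins k i) =
        (if g i = 0 then zm X Y else cmp C h (ins l (g i)))"
  proof
    fix i assume i: "i \<in> {1..k}"
    have "cmp C (cmp C h (imap k l g)) (ins k i) = cmp C h (cmp C (imap k l g) (ins k i))"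
      using assoc[OF ins_hom[OF i] indmap(1)[OF g] h] by simp
    then show "cmp C (cmp C h (imap k l g)) (ins k i) =
        (if g i = 0 then zm X Y else cmp C h (ins l (g i)))"
      using indmap(2)[OF g i] zmor_left[OF h X_obj] by simp
  qed
qed

lemma indmap_comp:
  assumes f: "maps_into k l f" and g: "maps_into l m g"
  shows "cmp C (imap l m g) (imap k l f) = imap k m (pcomp g f)"
proof (rule copower_ext)
  show "cmp C (imap l m g) (imap k l f) \<in> hom C (Pw k) (Pw m)"
    by (rule comp_hom[OF indmap(1)[OF f] indmap(1)[OF g]])
  show "imap k m (pcomp g f) \<in> hom C (Pw k) (Pw m)"
    by (rule indmap(1)[OF maps_into_pcomp[OF f g]])
  show "\<forall>i\<in>{1..k}. cmp C (cmp C (imap l m g) (imap k l f)) (ins k i) = cmp C (imap k m (pcomp g f)) (ins k i)"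
  proof
    fix i assume i: "i \<in> {1..k}"
    have "cmp C (cmp C (imap l m g) (imap k l f)) (ins k i) = cmp C (imap l m g) (cmp C (imap k l f) (ins k i))"
      using assoc[OF ins_hom[OF i] indmap(1)[OF f] indmap(1)[OF g]] by simp
    also have "\<dots> = cmp C (imap k m (pcomp g f)) (ins k i)"
    proof (cases "f i = 0")
      case True
      then show ?thesis using indmap(2)[OF f i] indmap(2)[OF maps_into_pcomp[OF f g] i]
          zmor_left[OF indmap(1)[OF g] X_obj] by (simp add: pcomp_def)
    next
      case False
      then have "f i \<in> {1..l}" using f i unfolding maps_into_def by auto
      then show ?thesis using False indmap(2)[OF f i] indmap(2)[OF maps_into_pcomp[OF f g] i]
          indmap(2)[OF g] by (simp add: pcomp_def)
    qed
    finally show "cmp C (cmp C (imap l m g) (imap k l f)) (ins k i) = cmp C (imap k m (pcomp g f)) (ins k i)" .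
  qed
qed

lemma gact_hom: "maps_into k l f \<Longrightarrow> x \<in> hom C X (Pw k) \<Longrightarrow> act k l f x \<in> hom C X (Pw l)"
  unfolding gact_def by (rule comp_hom[OF _ indmap(1)])

lemma gact_comp:
  assumes f: "maps_into k l f" and g: "maps_into l m g" and x: "x \<in> hom C X (Pw k)"
  shows "act l m g (act k l f x) = act k m (pcomp g f) x"
  unfolding gact_def using assoc[OF x indmap(1)[OF f] indmap(1)[OF g]] indmap_comp[OF f g] by simp

lemma gact_cong: "\<forall>x\<in>{1..k}. f x = g x \<Longrightarrow> act k l f y = act k l g y"
  unfolding gact_def using indmap_cong by metis

lemma indmap_1:
  assumes a: "maps_into 1 k a"
  shows "imap 1 k a = (if a 1 = 0 then zm X (Pw k) else ins k (a 1))"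
  unfolding indmap_def
proof (rule copair_unique)
  have "(if a 1 = 0 then zm X (Pw k) else ins k (a 1)) \<in> hom C X (Pw k)"
    using zm_hom ins_hom a unfolding maps_into_def by auto
  then show h: "(if a 1 = 0 then zm X (Pw k) else ins k (a 1)) \<in> hom C (Pw 1) (Pw k)"
    by (simp only: Pw_1)
  show "\<forall>i\<in>{1..1}. cmp C (if a 1 = 0 then zm X (Pw k) else ins k (a 1)) (ins 1 i) =
           (if a i = 0 then zm X (Pw k) else ins k (a i))"
    using id_right[OF h] ins_1 Pw_1 by auto
qed

lemma gact_1: "maps_into 1 k a \<Longrightarrow> act 1 k a (idm C X) = (if a 1 = 0 then zm X (Pw k) else ins k (a 1))"
  unfolding gact_def using id_right[OF indmap(1), of 1 k a] Pw_1 indmap_1 by simp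

end

section \<open>Consequences of the axioms of a formal difference law\<close>

text \<open>Besides the copower structure we fix r \<in> End(X)[2] satisfying the axioms of a formal
  difference law.\<close>
locale difference_law = copowers C X Pw ins
  for C :: "('o,'m) category" and X Pw ins +
  fixes r :: 'm
  assumes r_hom: "r \<in> hom C X (Pw 2)"
    and fdl: "formal_difference_law C X Pw ins r"
begin

abbreviation "rp n \<equiv> rpow C X Pw ins r n"

definition block :: "nat \<Rightarrow> nat \<Rightarrow> nat \<Rightarrow> nat" where
  "block n j = (\<lambda>i. if i = 0 then 0 else (j - 1) * 2 ^ n + i)"

lemma maps_into_block: "j \<in> {1..2} \<Longrightarrow> maps_into (2 ^ n) (2 * 2 ^ n) (block n j)"
  unfolding maps_into_def block_def by (auto simp: numeral_2_eq_2 le_Suc_eq)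

lemma rpow_Suc_block:
  "rp (Suc n) = cmp C (cp 2 (Pw (2 * 2 ^ n)) (\<lambda>j. act (2 ^ n) (2 * 2 ^ n) (block n j) (rp n))) r"
  by (simp add: emul_def block_def mult.commute)

lemma rpow_hom: "rp n \<in> hom C X (Pw (2 ^ n))"
proof (induction n)
  case 0 then show ?case using id_hom[OF X_obj] Pw_1 by simp
next
  case (Suc n)
  have "cp 2 (Pw (2 * 2 ^ n)) (\<lambda>j. act (2 ^ n) (2 * 2 ^ n) (block n j) (rp n))
          \<in> hom C (Pw 2) (Pw (2 * 2 ^ n))"
    using gact_hom[OF maps_into_block Suc.IH] by (intro copair(1)[OF Pw_obj]) blast
  then show ?case unfolding rpow_Suc_block using comp_hom[OF r_hom] by simp
qed

lemma rpow_1: "rp 1 = r"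
proof -
  have "cp 2 (Pw 2) (\<lambda>j. act 1 2 (block 0 j) (rp 0)) = idm C (Pw 2)"
  proof (rule copair_unique[OF id_hom[OF Pw_obj]], rule ballI)
    fix i :: nat assume i: "i \<in> {1..2}"
    have "maps_into 1 2 (block 0 i)" using maps_into_block[OF i, of 0] by simp
    then have "act 1 2 (block 0 i) (rp 0) = ins 2 i"
      using gact_1 i by (simp add: block_def)
    then show "cmp C (idm C (Pw 2)) (ins 2 i) = act 1 2 (block 0 i) (rp 0)"
      using id_left[OF ins_hom[OF i]] by simp
  qed
  then show ?thesis using rpow_Suc_block[of 0] id_left[OF r_hom] by simp
qed

text \<open>The push-forward a_*(r^n) in End(X)[k] of the n-th power of r along a labelling a of
  {1..2^n} by [k]. All elements of End(X) in the theorem are of this form.\<close>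
definition rpush :: "nat \<Rightarrow> nat \<Rightarrow> (nat \<Rightarrow> nat) \<Rightarrow> 'm" where
  "rpush k n a = act (2 ^ n) k a (rp n)"

text \<open>The operation (A, B) |-> [A, B] o r on Hom(X, Y); it becomes A - B once the cogroup
  structure is established.\<close>
definition rdiff :: "'o \<Rightarrow> 'm \<Rightarrow> 'm \<Rightarrow> 'm" where
  "rdiff Y A B = cmp C (cp2 Y A B) r"

lemma rpush_hom: "maps_into (2 ^ n) k a \<Longrightarrow> rpush k n a \<in> hom C X (Pw k)"
  unfolding rpush_def by (rule gact_hom[OF _ rpow_hom])

lemma rpush_cong: "\<forall>x\<in>{1..2 ^ n}. a x = b x \<Longrightarrow> rpush k n a = rpush k n b"
  unfolding rpush_def by (rule gact_cong)

lemma rdiff_hom: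
  "Y \<in> obj C \<Longrightarrow> A \<in> hom C X Y \<Longrightarrow> B \<in> hom C X Y \<Longrightarrow> rdiff Y A B \<in> hom C X Y"
  unfolding rdiff_def by (rule comp_hom[OF r_hom copair2_hom])

lemma comp_rdiff:
  assumes "g \<in> hom C Y Z" "A \<in> hom C X Y" "B \<in> hom C X Y"
  shows "cmp C g (rdiff Y A B) = rdiff Z (cmp C g A) (cmp C g B)"
proof -
  have Y: "Y \<in> obj C" using hom_obj[OF assms(1)] by simp
  show ?thesis unfolding rdiff_def
    using assoc[OF r_hom copair2_hom[OF Y assms(2,3)] assms(1)] copair2_comp[OF assms] by simp
qed

lemma rpush_glue:
  assumes a: "maps_into (2 ^ n) k a" and b: "maps_into (2 ^ n) k b"
  shows "rpush k (Suc n) (glue n a b) = rdiff (Pw k) (rpush k n a) (rpush k n b)"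
proof -
  let ?c = "glue n a b"
  let ?H = "\<lambda>j. act (2 ^ n) (2 * 2 ^ n) (block n j) (rp n)"
  have c: "maps_into (2 * 2 ^ n) k ?c" using maps_into_glue[OF a b] by simp
  have H: "\<forall>j\<in>{1..2}. ?H j \<in> hom C X (Pw (2 * 2 ^ n))"
    using gact_hom[OF maps_into_block rpow_hom] by blast
  have cpH: "cp 2 (Pw (2 * 2 ^ n)) ?H \<in> hom C (Pw 2) (Pw (2 * 2 ^ n))"
    by (rule copair(1)[OF Pw_obj H])
  have halves: "cmp C (imap (2 * 2 ^ n) k ?c) (?H j) = (if j = 1 then rpush k n a else rpush k n b)"
    if j: "j \<in> {1..2}" for j
  proof -
    have "cmp C (imap (2 * 2 ^ n) k ?c) (?H j) = act (2 ^ n) k (pcomp ?c (block n j)) (rp n)"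
      using gact_comp[OF maps_into_block[OF j] c rpow_hom] unfolding gact_def by simp
    moreover have "\<forall>x\<in>{1..2 ^ n}. pcomp ?c (block n j) x = (if j = 1 then a x else b x)"
      using j by (auto simp: pcomp_def block_def glue_def numeral_2_eq_2 le_Suc_eq)
    ultimately show ?thesis unfolding rpush_def using gact_cong by (metis (no_types, lifting))
  qed
  have "rpush k (Suc n) ?c = cmp C (imap (2 * 2 ^ n) k ?c) (cmp C (cp 2 (Pw (2 * 2 ^ n)) ?H) r)"
    unfolding rpush_def gact_def rpow_Suc_block by simp
  also have "\<dots> = cmp C (cmp C (imap (2 * 2 ^ n) k ?c) (cp 2 (Pw (2 * 2 ^ n)) ?H)) r"
    by (rule assoc[OF r_hom cpH indmap(1)[OF c]])
  also have "cmp C (imap (2 * 2 ^ n) k ?c) (cp 2 (Pw (2 * 2 ^ n)) ?H) =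
      cp 2 (Pw k) (\<lambda>j. cmp C (imap (2 * 2 ^ n) k ?c) (?H j))"
    by (rule copair_comp[OF indmap(1)[OF c] H])
  also have "\<dots> = cp2 (Pw k) (rpush k n a) (rpush k n b)"
    unfolding copair2_def using halves by (intro copair_cong) simp
  finally show ?thesis unfolding rdiff_def .
qed

lemma rpush_point: "maps_into 1 k a \<Longrightarrow> rpush k 0 a = (if a 1 = 0 then zm X (Pw k) else ins k (a 1))"
  unfolding rpush_def using gact_1 by simp

lemma rpush_zero: "rpush k n (\<lambda>_. 0) = zm X (Pw k)"
proof -
  have z: "maps_into (2 ^ n) k (\<lambda>_. 0)" unfolding maps_into_def by simp
  have "imap (2 ^ n) k (\<lambda>_. 0) = zm (Pw (2 ^ n)) (Pw k)"
    using indmap(2)[OF z] zmor_right[OF ins_hom Pw_obj]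
    by (intro copower_ext[OF indmap(1)[OF z] zmor_hom[OF Pw_obj Pw_obj]]) simp
  then show ?thesis unfolding rpush_def gact_def using zmor_right[OF rpow_hom Pw_obj] by simp
qed

lemma indmap_p22: "imap 2 1 (pmap 2 2) = cp2 X (idm C X) (zm X X)"
  unfolding indmap_def copair2_def Pw_1
  by (intro copair_cong) (auto simp: pmap_def ins_Suc_0 numeral_2_eq_2 le_Suc_eq)

lemma indmap_p21: "imap 2 1 (pmap 2 1) = cp2 X (zm X X) (idm C X)"
  unfolding indmap_def copair2_def Pw_1
  by (intro copair_cong) (auto simp: pmap_def ins_Suc_0 numeral_2_eq_2 le_Suc_eq)

text \<open>Since p^2_2(r) = 1, subtracting zero does nothing.\<close>
lemma rdiff_zero_right:
  assumes A: "A \<in> hom C X Y"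
  shows "rdiff Y A (zm X Y) = A"
proof -
  have unit: "rdiff X (idm C X) (zm X X) = idm C X"
    using fdl indmap_p22 unfolding formal_difference_law_def rdiff_def gact_def by simp
  have "rdiff Y A (zm X Y) = cmp C A (rdiff X (idm C X) (zm X X))"
    using comp_rdiff[OF A id_hom[OF X_obj] zmor_hom[OF X_obj X_obj]] id_right[OF A] zmor_left[OF A X_obj]
    by simp
  then show ?thesis unfolding unit using id_right[OF A] by simp
qed

text \<open>The co-inverse p^2_1(r), which is 0 - id.\<close>
definition coinv :: 'm where
  "coinv = act 2 1 (pmap 2 1) r"

lemma coinv_rdiff: "coinv = rdiff X (zm X X) (idm C X)"
  unfolding coinv_def gact_def rdiff_def indmap_p21 ..

lemma coinv_hom: "coinv \<in> hom C X X"
  unfolding coinv_rdiff by (rule rdiff_hom[OF X_obj zmor_hom[OF X_obj X_obj] id_hom[OF X_obj]])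

lemma ins_coinv: "i \<in> {1..k} \<Longrightarrow> cmp C (ins k i) coinv = rdiff (Pw k) (zm X (Pw k)) (ins k i)"
  unfolding coinv_rdiff
  using comp_rdiff[OF ins_hom zmor_hom[OF X_obj X_obj] id_hom[OF X_obj]]
    zmor_left[OF ins_hom X_obj] id_right[OF ins_hom] by simp

text \<open>The coaddition w = p^3_2 p^4_2 (r^2), i.e. the push-forward of r^2 along (1, 0, 0, 2).\<close>
definition coadd :: 'm where
  "coadd = act 3 2 (pmap 3 2) (act 4 3 (pmap 4 2) (rp 2))"

lemma coadd_rpush:
  "coadd = rpush 2 2 (glue 1 (\<lambda>x. if x = 1 then 1 else 0) (\<lambda>x. if x = 1 then 0 else 2))"
proof -
  have p42: "maps_into 4 3 (pmap 4 2)" and p32: "maps_into 3 2 (pmap 3 2)"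
    unfolding maps_into_def pmap_def by auto
  have "coadd = act 4 2 (pcomp (pmap 3 2) (pmap 4 2)) (rp 2)"
    unfolding coadd_def using gact_comp[OF p42 p32] rpow_hom[of 2] by simp
  also have "\<dots> = act 4 2 (glue 1 (\<lambda>x. if x = 1 then 1 else 0) (\<lambda>x. if x = 1 then 0 else 2)) (rp 2)"
  proof (rule gact_cong, rule ballI)
    fix x :: nat assume "x \<in> {1..4}"
    then have "x = 1 \<or> x = 2 \<or> x = 3 \<or> x = 4" by auto
    then show "pcomp (pmap 3 2) (pmap 4 2) x =
        glue 1 (\<lambda>x. if x = 1 then 1 else 0) (\<lambda>x. if x = 1 then 0 else 2) x"
      by (auto simp: pcomp_def pmap_def glue_def)
  qed
  finally show ?thesis unfolding rpush_def by simp
qed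

lemma coadd_hom: "coadd \<in> hom C X (Pw 2)"
  unfolding coadd_rpush by (rule rpush_hom) (auto simp: maps_into_def glue_def)

definition pick :: "'o \<Rightarrow> 'm \<Rightarrow> 'm \<Rightarrow> nat \<Rightarrow> 'm" where
  "pick Y A B x = (if x = 0 then zm X Y else if x = 1 then A else B)"

lemma copair2_indmap:
  assumes Y: "Y \<in> obj C" and A: "A \<in> hom C X Y" and B: "B \<in> hom C X Y" and g: "maps_into 2 2 g"
  shows "cmp C (cp2 Y A B) (imap 2 2 g) = cp2 Y (pick Y A B (g 1)) (pick Y A B (g 2))"
proof -
  have "(if g i = 0 then zm X Y else cmp C (cp2 Y A B) (ins 2 (g i))) =
        (if i = 1 then pick Y A B (g 1) else pick Y A B (g 2))" if i: "i \<in> {1..2}" for i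
  proof -
    have "g i \<le> 2" using g i unfolding maps_into_def by auto
    then have "g i = 0 \<or> g i = 1 \<or> g i = 2" by auto
    moreover have "i = 1 \<or> i = 2" using i by auto
    ultimately show ?thesis using copair2_ins[OF Y A B] unfolding pick_def by auto
  qed
  then have "cp 2 Y (\<lambda>i. if g i = 0 then zm X Y else cmp C (cp2 Y A B) (ins 2 (g i))) =
             cp2 Y (pick Y A B (g 1)) (pick Y A B (g 2))"
    unfolding copair2_def[of C Pw ins Y "pick Y A B (g 1)"] by (intro copair_cong) simp
  then show ?thesis using comp_indmap[OF copair2_hom[OF Y A B] g] by simp
qed

lemma copair2_rpush_1:
  assumes Y: "Y \<in> obj C" and A: "A \<in> hom C X Y" and B: "B \<in> hom C X Y" and g: "maps_into 2 2 g"
  shows "cmp C (cp2 Y A B) (rpush 2 1 g) = rdiff Y (pick Y A B (g 1)) (pick Y A B (g 2))"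
proof -
  have "cmp C (cp2 Y A B) (rpush 2 1 g) = cmp C (cmp C (cp2 Y A B) (imap 2 2 g)) r"
    unfolding rpush_def gact_def rpow_1 using assoc[OF r_hom indmap(1)[OF g] copair2_hom[OF Y A B]]
    by simp
  then show ?thesis unfolding copair2_indmap[OF assms] rdiff_def .
qed

lemma cg_add_rdiff:
  assumes Y: "Y \<in> obj C" and A: "A \<in> hom C X Y" and B: "B \<in> hom C X Y"
  shows "cg_add C Pw ins coadd Y A B = rdiff Y A (rdiff Y (zm X Y) B)"
proof -
  let ?a = "\<lambda>x::nat. if x = 1 then 1 else 0" and ?b = "\<lambda>x::nat. if x = 1 then 0 else 2"
  have a: "maps_into 2 2 ?a" and b: "maps_into 2 2 ?b" unfolding maps_into_def by auto
  have "rpush 2 (Suc 1) (glue 1 ?a ?b) = rdiff (Pw 2) (rpush 2 1 ?a) (rpush 2 1 ?b)"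
    by (rule rpush_glue) (use a b in simp_all)
  then have "coadd = rdiff (Pw 2) (rpush 2 1 ?a) (rpush 2 1 ?b)"
    unfolding coadd_rpush by (simp only: Suc_1)
  then have "cg_add C Pw ins coadd Y A B =
      rdiff Y (cmp C (cp2 Y A B) (rpush 2 1 ?a)) (cmp C (cp2 Y A B) (rpush 2 1 ?b))"
    unfolding cg_add_def
    using comp_rdiff[OF copair2_hom[OF Y A B] rpush_hom rpush_hom] a b by simp
  also have "\<dots> = rdiff Y (rdiff Y A (zm X Y)) (rdiff Y (zm X Y) B)"
    unfolding copair2_rpush_1[OF Y A B a] copair2_rpush_1[OF Y A B b] pick_def by simp
  finally show ?thesis using rdiff_zero_right[OF A] by simp
qed

subsection \<open>Axioms (3) and (4): invariance of the push-forwards\<close>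

lemma rpow_special_perm:
  "1 \<le> n \<Longrightarrow> special_perm n \<pi> \<Longrightarrow> act (2 ^ n) (2 ^ n) \<pi> (rp n) = rp n"
  using fdl unfolding formal_difference_law_def by blast

lemma rpush_special_perm:
  assumes n: "1 \<le> n" and p: "special_perm n \<pi>" and a: "maps_into (2 ^ n) k a"
  shows "rpush k n (\<lambda>x. a (\<pi> x)) = rpush k n a"
proof -
  have bij: "bij_betw \<pi> {1..2 ^ n} {1..2 ^ n}" using p unfolding special_perm_def by blast
  have pin: "\<And>x. x \<in> {1..2 ^ n} \<Longrightarrow> \<pi> x \<in> {1..2 ^ n}" using bij_betw_apply[OF bij] by blast
  have pp: "maps_into (2 ^ n) (2 ^ n) \<pi>" unfolding maps_into_def using pin by auto
  have "rpush k n a = act (2 ^ n) k a (act (2 ^ n) (2 ^ n) \<pi> (rp n))"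
    unfolding rpush_def rpow_special_perm[OF n p] ..
  also have "\<dots> = act (2 ^ n) k (pcomp a \<pi>) (rp n)" by (rule gact_comp[OF pp a rpow_hom])
  also have "\<dots> = rpush k n (\<lambda>x. a (\<pi> x))" unfolding rpush_def
    by (rule gact_cong) (use pin in \<open>fastforce simp: pcomp_def\<close>)
  finally show ?thesis by simp
qed

lemma smap_same_target:
  assumes "1 \<le> i" "i < j" "1 \<le> x"
  shows "smap N i j i x = (if x = j then i else if x < j then x else x - 1)"
proof (cases "x = i \<or> x = j")
  case False
  have "card {y \<in> {i, j}. y < x} = (if x < i then 0 else if x < j then 1 else 2)"
  proof -
    have "x < i \<Longrightarrow> {y \<in> {i, j}. y < x} = {}" using assms by auto
    moreover have "i < x \<Longrightarrow> x < j \<Longrightarrow> {y \<in> {i, j}. y < x} = {i}" by auto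
    moreover have "j < x \<Longrightarrow> {y \<in> {i, j}. y < x} = {i, j}" using assms by auto
    ultimately show ?thesis using False assms by (auto simp: card_insert_if)
  qed
  then show ?thesis using False assms unfolding smap_def Let_def by auto
qed (use assms in \<open>auto simp: smap_def\<close>)

text \<open>Axiom (4) with l = i, rewritten by functoriality: collapsing the points i < j of opposite
  sign onto one point i agrees with killing j, killing i, and re-inserting an empty slot at i.\<close>
lemma rpow_collapse:
  assumes n: "1 \<le> n" and i: "1 \<le> i" and ij: "i < j" and j: "j \<le> 2 ^ n"
    and sg: "(in_Aplus n i \<and> in_Aminus n j) \<or> (in_Aminus n i \<and> in_Aplus n j)"
  shows "act (2 ^ n) (2 ^ n - 1) (smap (2 ^ n) i j i) (rp n) =
         act (2 ^ n) (2 ^ n - 1)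
           (pcomp (dmap (2 ^ n - 1) i) (pcomp (pmap (2 ^ n - 1) i) (pmap (2 ^ n) j))) (rp n)"
proof -
  define N where "N = (2::nat) ^ n"
  have N2: "2 \<le> N" unfolding N_def using n by (metis power_one_right power_increasing zero_less_numeral one_le_numeral)
  have pj: "maps_into N (N - 1) (pmap N j)" unfolding maps_into_def pmap_def using j N_def by auto
  have pi: "maps_into (N - 1) (N - 2) (pmap (N - 1) i)" unfolding maps_into_def pmap_def using ij j N_def by auto
  have di: "maps_into (N - 2) (N - 1) (dmap (N - 1) i)" unfolding maps_into_def dmap_def using N2 by auto
  have R: "rp n \<in> hom C X (Pw N)" using rpow_hom unfolding N_def .
  have "\<forall>k \<ge> 1. \<forall>i j l. 1 \<le> i \<and> i < j \<and> j \<le> 2 ^ k \<and>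
        ((in_Aplus k i \<and> in_Aminus k j) \<or> (in_Aminus k i \<and> in_Aplus k j)) \<and> 1 \<le> l \<and> l \<le> 2 ^ k - 1 \<longrightarrow>
        act (2 ^ k) (2 ^ k - 1) (smap (2 ^ k) i j l) (rp k) =
        act (2 ^ k - 2) (2 ^ k - 1) (dmap (2 ^ k - 1) l)
          (act (2 ^ k - 1) (2 ^ k - 2) (pmap (2 ^ k - 1) i) (act (2 ^ k) (2 ^ k - 1) (pmap (2 ^ k) j) (rp k)))"
    using fdl unfolding formal_difference_law_def by (elim conjE)
  then have "act N (N - 1) (smap N i j i) (rp n) =
        act (N - 2) (N - 1) (dmap (N - 1) i) (act (N - 1) (N - 2) (pmap (N - 1) i) (act N (N - 1) (pmap N j) (rp n)))"
    using n i ij j sg unfolding N_def by simp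
  also have "\<dots> = act N (N - 1) (pcomp (dmap (N - 1) i) (pcomp (pmap (N - 1) i) (pmap N j))) (rp n)"
    using gact_comp[OF pj pi R] gact_comp[OF maps_into_pcomp[OF pj pi] di R] by simp
  finally show ?thesis unfolding N_def .
qed

lemma rpush_cancel_ordered:
  assumes n: "1 \<le> n" and a: "maps_into (2 ^ n) k a" and i: "1 \<le> i" and ij: "i < j" and j: "j \<le> 2 ^ n"
    and sg: "(in_Aplus n i \<and> in_Aminus n j) \<or> (in_Aminus n i \<and> in_Aplus n j)"
    and aij: "a i = a j"
  shows "rpush k n (\<lambda>x. if x = i \<or> x = j then 0 else a x) = rpush k n a"
proof -
  define N where "N = (2::nat) ^ n"
  let ?s = "smap N i j i"
  let ?c = "pcomp (dmap (N - 1) i) (pcomp (pmap (N - 1) i) (pmap N j))"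
  define a' where "a' = (\<lambda>y. if y = 0 then 0 else if y < j then a y else a (Suc y))"
  have s: "maps_into N (N - 1) ?s"
    unfolding maps_into_def using smap_same_target[OF i ij] ij j i unfolding N_def by auto
  have c: "maps_into N (N - 1) ?c"
    unfolding maps_into_def pcomp_def pmap_def dmap_def using ij j unfolding N_def by auto
  have a': "maps_into (N - 1) k a'" using a unfolding maps_into_def a'_def N_def by auto
  have R: "rp n \<in> hom C X (Pw N)" using rpow_hom unfolding N_def .
  \<comment> \<open>a factors through the collapse, so axiom (4) applies\<close>
  have "rpush k n a = act N k (pcomp a' ?s) (rp n)"
    unfolding rpush_def N_def
    by (rule gact_cong) (use aij ij i in \<open>auto simp: pcomp_def a'_def smap_same_target N_def\<close>)
  also have "\<dots> = act (N - 1) k a' (act N (N - 1) ?s (rp n))" by (rule gact_comp[OF s a' R, symmetric])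
  also have "\<dots> = act (N - 1) k a' (act N (N - 1) ?c (rp n))"
    using rpow_collapse[OF n i ij j sg] unfolding N_def by simp
  also have "\<dots> = act N k (pcomp a' ?c) (rp n)" by (rule gact_comp[OF c a' R])
  also have "\<dots> = rpush k n (\<lambda>x. if x = i \<or> x = j then 0 else a x)"
  proof -
    have e: "\<And>x. j < x \<Longrightarrow> Suc (Suc (x - Suc (Suc 0))) = x" using ij i by auto
    show ?thesis unfolding rpush_def N_def
      by (rule gact_cong) (use ij i in \<open>auto simp: pcomp_def a'_def pmap_def dmap_def e\<close>)
  qed
  finally show ?thesis by simp
qed

lemma rpush_cancel:
  assumes n: "1 \<le> n" and a: "maps_into (2 ^ n) k a" and i: "in_Aplus n i" and j: "in_Aminus n j"
    and aij: "a i = a j"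
  shows "rpush k n (\<lambda>x. if x = i \<or> x = j then 0 else a x) = rpush k n a"
proof -
  have "i \<noteq> j" "1 \<le> i" "i \<le> 2 ^ n" "1 \<le> j" "j \<le> 2 ^ n"
    using i j by (auto simp: in_Aplus_def in_Aminus_def)
  then consider "i < j" | "j < i" by linarith
  then show ?thesis
  proof cases
    case 1
    then show ?thesis using rpush_cancel_ordered[OF n a] i j aij \<open>1 \<le> i\<close> \<open>j \<le> 2 ^ n\<close> by blast
  next
    case 2
    have "(\<lambda>x. if x = j \<or> x = i then 0 else a x) = (\<lambda>x. if x = i \<or> x = j then 0 else a x)"
      by auto
    then show ?thesis
      using rpush_cancel_ordered[OF n a \<open>1 \<le> j\<close> 2 \<open>i \<le> 2 ^ n\<close>] i j aij by auto
  qed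
qed

text \<open>Every labelling can be replaced by a separated one with the same signed count and the
  same push-forward, by cancelling opposite pairs one at a time.\<close>
lemma rpush_separate:
  assumes n: "1 \<le> n"
  shows "maps_into (2 ^ n) k a \<Longrightarrow>
    \<exists>b. maps_into (2 ^ n) k b \<and> separated n b \<and>
        signed_count n b = signed_count n a \<and> rpush k n b = rpush k n a"
proof (induction "card {x\<in>{1..2 ^ n}. a x \<noteq> 0}" arbitrary: a rule: less_induct)
  case less
  show ?case
  proof (cases "separated n a")
    case True then show ?thesis using less.prems by blast
  next
    case False
    then obtain i j where i: "in_Aplus n i" and j: "in_Aminus n j" and aij: "a i = a j" and ai: "a i \<noteq> 0"
      unfolding separated_def by blast
    define a2 where "a2 = (\<lambda>x. if x = i \<or> x = j then 0 else a x)"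
    have a2: "maps_into (2 ^ n) k a2" using less.prems unfolding maps_into_def a2_def by auto
    have iS: "i \<in> {1..2 ^ n}" using i by (auto simp: in_Aplus_def)
    have "card {x\<in>{1..2 ^ n}. a2 x \<noteq> 0} \<le> card ({x\<in>{1..2 ^ n}. a x \<noteq> 0} - {i})"
      by (rule card_mono) (auto simp: a2_def)
    also have "\<dots> < card {x\<in>{1..2 ^ n}. a x \<noteq> 0}"
      by (rule card_Diff1_less) (use iS ai in simp_all)
    finally obtain b where "maps_into (2 ^ n) k b" "separated n b"
        "signed_count n b = signed_count n a2" "rpush k n b = rpush k n a2"
      using less.hyps a2 by blast
    then show ?thesis
      using signed_count_cancel[OF i j aij] rpush_cancel[OF n less.prems i j aij] unfolding a2_def by auto
  qed
qed

lemma rpush_determined: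
  assumes n: "1 \<le> n" and a: "maps_into (2 ^ n) k a" and b: "maps_into (2 ^ n) k b"
    and same: "signed_count n a = signed_count n b"
  shows "rpush k n a = rpush k n b"
proof -
  obtain a' where a': "maps_into (2 ^ n) k a'" "separated n a'"
      "signed_count n a' = signed_count n a" "rpush k n a' = rpush k n a"
    using rpush_separate[OF n a] by blast
  obtain b' where b': "maps_into (2 ^ n) k b'" "separated n b'"
      "signed_count n b' = signed_count n b" "rpush k n b' = rpush k n b"
    using rpush_separate[OF n b] by blast
  obtain \<pi> where \<pi>: "special_perm n \<pi>" "\<forall>x\<in>{1..2 ^ n}. b' x = a' (\<pi> x)"
    using separated_special_perm[OF a'(1,2) b'(1,2)] a'(3) b'(3) same by auto
  have "rpush k n b' = rpush k n (\<lambda>x. a' (\<pi> x))" by (rule rpush_cong) (use \<pi>(2) in simp)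
  also have "\<dots> = rpush k n a'" by (rule rpush_special_perm[OF n \<pi>(1) a'(1)])
  finally show ?thesis using a'(4) b'(4) by simp
qed

lemma rpush_pad:
  assumes a: "maps_into (2 ^ n) k a" and nN: "n \<le> N"
  shows "\<exists>a'. maps_into (2 ^ N) k a' \<and> signed_count N a' = signed_count n a \<and> rpush k N a' = rpush k n a"
  using nN
proof (induction N rule: dec_induct)
  case base then show ?case using a by blast
next
  case (step m)
  then obtain a' where a': "maps_into (2 ^ m) k a'" "signed_count m a' = signed_count n a"
      "rpush k m a' = rpush k n a" by blast
  have z: "maps_into (2 ^ m) k (\<lambda>_. 0)" unfolding maps_into_def by simp
  have "maps_into (2 ^ Suc m) k (glue m a' (\<lambda>_. 0))" by (rule maps_into_glue[OF a'(1) z])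
  moreover have "signed_count (Suc m) (glue m a' (\<lambda>_. 0)) = signed_count m a'"
    by (rule ext) (simp add: signed_count_glue signed_count_zero)
  moreover have "rpush k (Suc m) (glue m a' (\<lambda>_. 0)) = rpush k m a'"
    using rpush_glue[OF a'(1) z] rpush_zero rdiff_zero_right[OF rpush_hom[OF a'(1)]] by simp
  ultimately show ?case using a' by metis
qed

subsection \<open>Representing morphisms by elements of HZ\<close>

text \<open>By the previous lemmas this relation is a partial function
  HZ[k] -> End(X)[k] compatible with the operations.\<close>
definition represents :: "nat \<Rightarrow> 'm \<Rightarrow> (nat \<Rightarrow> int) \<Rightarrow> bool" where
  "represents k m c \<longleftrightarrow> (\<exists>n a. maps_into (2 ^ n) k a \<and> c = signed_count n a \<and> m = rpush k n a)"

lemma represents_hom: "represents k m c \<Longrightarrow> m \<in> hom C X (Pw k)"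
  unfolding represents_def using rpush_hom by blast

lemma represents_eq:
  assumes "represents k m c" "represents k m' c'" "c = c'"
  shows "m = m'"
proof -
  obtain n a where a: "maps_into (2 ^ n) k a" "c = signed_count n a" "m = rpush k n a"
    using assms(1) unfolding represents_def by blast
  obtain n' b where b: "maps_into (2 ^ n') k b" "c' = signed_count n' b" "m' = rpush k n' b"
    using assms(2) unfolding represents_def by blast
  define N where "N = max (max n n') 1"
  have N: "n \<le> N" "n' \<le> N" "1 \<le> N" unfolding N_def by auto
  obtain a' where a': "maps_into (2 ^ N) k a'" "signed_count N a' = signed_count n a" "rpush k N a' = rpush k n a"
    using rpush_pad[OF a(1) N(1)] by blast
  obtain b' where b': "maps_into (2 ^ N) k b'" "signed_count N b' = signed_count n' b" "rpush k N b' = rpush k n' b"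
    using rpush_pad[OF b(1) N(2)] by blast
  have "rpush k N a' = rpush k N b'"
    by (rule rpush_determined[OF N(3) a'(1) b'(1)]) (use a' b' a b assms(3) in simp)
  then show ?thesis using a' b' a b by simp
qed

text \<open>The r-difference of represented morphisms is represented by the difference: pad both to
  the same power of r and glue the labellings.\<close>
lemma represents_rdiff:
  assumes "represents k A a" "represents k B b"
  shows "represents k (rdiff (Pw k) A B) (\<lambda>y. a y - b y)"
proof -
  obtain n a0 where na: "maps_into (2 ^ n) k a0" "a = signed_count n a0" "A = rpush k n a0"
    using assms(1) unfolding represents_def by blast
  obtain n' b0 where nb: "maps_into (2 ^ n') k b0" "b = signed_count n' b0" "B = rpush k n' b0"
    using assms(2) unfolding represents_def by blast
  define N where "N = max n n'"
  have N: "n \<le> N" "n' \<le> N" unfolding N_def by auto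
  obtain a' where a': "maps_into (2 ^ N) k a'" "signed_count N a' = a" "rpush k N a' = A"
    using rpush_pad[OF na(1) N(1)] na by auto
  obtain b' where b': "maps_into (2 ^ N) k b'" "signed_count N b' = b" "rpush k N b' = B"
    using rpush_pad[OF nb(1) N(2)] nb by auto
  have "rdiff (Pw k) A B = rpush k (Suc N) (glue N a' b')" using rpush_glue[OF a'(1) b'(1)] a' b' by simp
  moreover have "(\<lambda>y. a y - b y) = signed_count (Suc N) (glue N a' b')"
    using signed_count_glue a' b' by auto
  ultimately show ?thesis unfolding represents_def using maps_into_glue[OF a'(1) b'(1)] by blast
qed

lemma represents_zero: "represents k (zm X (Pw k)) (\<lambda>_. 0)"
  unfolding represents_def
  by (rule exI[of _ 0], rule exI[of _ "\<lambda>_. 0"]) (simp add: maps_into_def signed_count_zero rpush_zero)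

lemma represents_ins: "i \<in> {1..k} \<Longrightarrow> represents k (ins k i) (\<lambda>y. if y = i then 1 else 0)"
  unfolding represents_def
  by (rule exI[of _ 0], rule exI[of _ "\<lambda>_. i"]) (auto simp: maps_into_def signed_count_point rpush_point)

lemma represents_add:
  assumes "represents k A a" "represents k B b"
  shows "represents k (cg_add C Pw ins coadd (Pw k) A B) (\<lambda>y. a y + b y)"
proof -
  have "represents k (rdiff (Pw k) A (rdiff (Pw k) (zm X (Pw k)) B)) (\<lambda>y. a y - (0 - b y))"
    by (rule represents_rdiff[OF assms(1) represents_rdiff[OF represents_zero assms(2)]])
  then show ?thesis
    using cg_add_rdiff[OF Pw_obj represents_hom[OF assms(1)] represents_hom[OF assms(2)]] by simp
qed

lemma represents_coinv_ins:
  assumes i: "i \<in> {1..k}"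
  shows "represents k (cmp C (ins k i) coinv) (\<lambda>y. if y = i then -1 else 0)"
proof -
  have "represents k (rdiff (Pw k) (zm X (Pw k)) (ins k i)) (\<lambda>y. 0 - (if y = i then 1 else 0))"
    by (rule represents_rdiff[OF represents_zero represents_ins[OF i]])
  moreover have "(\<lambda>y. 0 - (if y = i then 1 else 0)) = (\<lambda>y. if y = i then -1 else (0::int))" by auto
  ultimately show ?thesis using ins_coinv[OF i] by simp
qed

lemma represents_nmul:
  "represents k g c \<Longrightarrow> represents k (cg_nmul C X Pw ins coadd (Pw k) m g) (\<lambda>y. int m * c y)"
proof (induction m)
  case 0 then show ?case using represents_zero by simp
next
  case (Suc m)
  then show ?case using represents_add[OF Suc.IH[OF Suc.prems] Suc.prems] by (simp add: algebra_simps)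
qed

lemma represents_zmul:
  assumes i: "i \<in> {1..k}"
  shows "represents k (cg_zmul C X Pw ins coadd coinv (Pw k) z (ins k i)) (\<lambda>y. if y = i then z else 0)"
proof (cases "0 \<le> z")
  case True
  have "(\<lambda>y. int (nat z) * (if y = i then 1 else 0)) = (\<lambda>y. if y = i then z else 0)"
    using True by auto
  then show ?thesis using True represents_nmul[OF represents_ins[OF i], of "nat z"]
    unfolding cg_zmul_def by simp
next
  case False
  have "(\<lambda>y. int (nat (- z)) * (if y = i then - 1 else 0)) = (\<lambda>y. if y = i then z else 0)"
    using False by auto
  then show ?thesis using False represents_nmul[OF represents_coinv_ins[OF i], of "nat (- z)"]
    unfolding cg_zmul_def by simp
qed

lemma represents_cg_map:
  "represents k (cg_map C X Pw ins coadd coinv k a) (\<lambda>y. if y \<in> {1..k} then a y else 0)"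
proof -
  have fold: "represents k (foldr (\<lambda>i acc. cg_add C Pw ins coadd (Pw k) acc
            (cg_zmul C X Pw ins coadd coinv (Pw k) (a i) (ins k i))) xs (zm X (Pw k)))
          (\<lambda>y. if y \<in> set xs then a y else 0)" if "set xs \<subseteq> {1..k}" "distinct xs" for xs
    using that
  proof (induction xs)
    case Nil then show ?case using represents_zero by simp
  next
    case (Cons i xs)
    have "(\<lambda>y. (if y \<in> set xs then a y else 0) + (if y = i then a i else 0)) =
          (\<lambda>y. if y \<in> set (i # xs) then a y else 0)"
      using Cons.prems by (auto simp: fun_eq_iff)
    then show ?case using represents_add[OF Cons.IH represents_zmul[where i = i and z = "a i"]] Cons.prems by simp
  qed
  have S: "set [1..<k+1] = {1..k}" unfolding set_upt by auto
  have "represents k (cg_map C X Pw ins coadd coinv k a) (\<lambda>y. if y \<in> set [1..<k+1] then a y else 0)"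
    unfolding cg_map_def by (rule fold) (simp_all only: S distinct_upt order_refl)
  then show ?thesis unfolding S .
qed

lemma represents_on_X:
  shows "represents 1 (idm C X) (\<lambda>y. if y = 1 then 1 else 0)"
    and "represents 1 (zm X X) (\<lambda>_. 0)"
    and "represents 1 coinv (\<lambda>y. if y = 1 then -1 else 0)"
  using represents_ins[of 1 1] represents_zero[of 1] represents_coinv_ins[of 1 1]
    ins_1 Pw_1 id_left[OF coinv_hom] by simp_all

text \<open>All cogroup axioms are identities between sums of coproduct injections and their
  negatives, and hold because both sides are represented by the same element of HZ.\<close>
lemma coadd_abelian_cogroup: "abelian_cogroup C X Pw ins coadd coinv"
proof -
  have add: "represents k (cmp C (cp2 (Pw k) A B) coadd) (\<lambda>y. a y + b y)"
    if "represents k A a" "represents k B b" for k A B a b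
    using represents_add[OF that] unfolding cg_add_def .
  have add_X: "represents 1 (cmp C (cp2 X A B) coadd) (\<lambda>y. a y + b y)"
    if "represents 1 A a" "represents 1 B b" for A B a b
    using add[OF that] Pw_1 by simp
  have ins3: "represents 3 (ins 3 i) (\<lambda>y. if y = i then 1 else 0)" if "i \<in> {1, 2, 3}" for i
    using represents_ins that by auto
  have ins2: "represents 2 (ins 2 i) (\<lambda>y. if y = i then 1 else 0)" if "i \<in> {1, 2}" for i
    using represents_ins that by auto
  note X = represents_on_X
  have coassoc:
    "cmp C (cp2 (Pw 3) (cmp C (cp2 (Pw 3) (ins 3 1) (ins 3 2)) coadd) (ins 3 3)) coadd =
     cmp C (cp2 (Pw 3) (ins 3 1) (cmp C (cp2 (Pw 3) (ins 3 2) (ins 3 3)) coadd)) coadd"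
    by (rule represents_eq[OF add[OF add[OF ins3 ins3] ins3] add[OF ins3 add[OF ins3 ins3]]])
      (auto simp: fun_eq_iff)
  have counit: "cmp C (cp2 X (zm X X) (idm C X)) coadd = idm C X"
    "cmp C (cp2 X (idm C X) (zm X X)) coadd = idm C X"
    by (rule represents_eq[OF add_X[OF X(2) X(1)] X(1)], simp)
      (rule represents_eq[OF add_X[OF X(1) X(2)] X(1)], simp)
  have coinverse: "cmp C (cp2 X coinv (idm C X)) coadd = zm X X"
    "cmp C (cp2 X (idm C X) coinv) coadd = zm X X"
    by (rule represents_eq[OF add_X[OF X(3) X(1)] X(2)], simp add: fun_eq_iff)
      (rule represents_eq[OF add_X[OF X(1) X(3)] X(2)], simp add: fun_eq_iff)
  have "cmp C (cp2 (Pw 2) (ins 2 2) (ins 2 1)) coadd = cmp C (cp2 (Pw 2) (ins 2 1) (ins 2 2)) coadd"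
    by (rule represents_eq[OF add[OF ins2 ins2] add[OF ins2 ins2]]) (auto simp: fun_eq_iff)
  then have cocomm: "cmp C (cp2 (Pw 2) (ins 2 2) (ins 2 1)) coadd = coadd"
    unfolding copair2_ins_id id_left[OF coadd_hom] .
  show ?thesis unfolding abelian_cogroup_def
    using coadd_hom coinv_hom coassoc counit coinverse cocomm by blast
qed

text \<open>The multiplicative map HZ -> End(X) determined by r agrees with the one determined by the
  cogroup structure: both sides are represented by the signed count of f.\<close>
lemma rpush_cg_map:
  assumes n: "1 \<le> n" and f: "maps_into (2 ^ n) k f"
  shows "rpush k n f = cg_map C X Pw ins coadd coinv k (signed_count n f)"
proof (rule represents_eq)
  show "represents k (rpush k n f) (signed_count n f)" unfolding represents_def using f by blast
  show "represents k (cg_map C X Pw ins coadd coinv k (signed_count n f))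
          (\<lambda>y. if y \<in> {1..k} then signed_count n f y else 0)"
    by (rule represents_cg_map)
  show "signed_count n f = (\<lambda>y. if y \<in> {1..k} then signed_count n f y else 0)"
    using signed_count_support[OF f] by auto
qed

end

theorem mainTheorem12:
  fixes C :: "('o,'m) category" and X :: 'o and Pw :: "nat \<Rightarrow> 'o"
    and ins :: "nat \<Rightarrow> nat \<Rightarrow> 'm" and r :: 'm
  assumes "is_category C" and "has_zero_object C" and "has_finite_coproducts C"
    and "X \<in> obj C"
    and "\<forall>k. is_coproduct C (\<lambda>_. X) k (Pw k) (ins k)"
    and "Pw 1 = X" and "ins 1 1 = idm C X"
    and "r \<in> hom C X (Pw 2)"
    and "formal_difference_law C X Pw ins r"
  shows "let w = gact C X Pw ins 3 2 (pmap 3 2)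
                   (gact C X Pw ins 4 3 (pmap 4 2) (rpow C X Pw ins r 2));
             \<nu> = gact C X Pw ins 2 1 (pmap 2 1) r
         in abelian_cogroup C X Pw ins w \<nu> \<and>
            (\<forall>n k f. 1 \<le> n \<and> f 0 = 0 \<and> (\<forall>x\<in>{1..2 ^ n}. f x \<le> k) \<longrightarrow>
               gact C X Pw ins (2 ^ n) k f (rpow C X Pw ins r n) =
               cg_map C X Pw ins w \<nu> k (hz_act (2 ^ n) f (pm1 n)))"
proof -
  interpret difference_law C X Pw ins r
    using assms by unfold_locales auto
  show ?thesis
    using coadd_abelian_cogroup rpush_cg_map
    unfolding Let_def coadd_def coinv_def rpush_def signed_count_def maps_into_def by blast
qed

end
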